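(* Consider problem (P) with $d_i=p$, $A_i=I_p$ and $\mathcal{X}_i=\mathbb{R}^{p}$ for all $i$, under Assumption 1, let $\mathcal{G}$ be a directed, strongly connected and weight-balanced graph, and suppose each $f_i$ is $\mu_i$-strongly convex and $l_i$-smooth. Let $\mu=\min_i\mu_i$, $l=\max_i l_i$, $\varphi>0$, and let $\alpha,\beta$ satisfy $$\alpha\ge\max\Big\{\tfrac12,\;\frac{(\varphi^2+3\varphi+3)+l^2+\frac32-\mu}{(\varphi+1)\mu}\Big\},\qquad \beta\ge\frac{2(\varphi+1)^2\alpha^2+1}{2\varphi\alpha\,\eta_2(\hat L)}.$$ Then for any initial point $(\mathbf{x}(0),\boldsymbol\lambda(0),\mathbf{z}(0))\in\mathbb{R}^{np}\times\mathbb{R}^{np}\times\mathbb{R}^{np}$ with $\sum_{i=1}^n z_i(0)=0$, the trajectory of IDEA converges exponentially to a point $(\mathbf{x}^*,\boldsymbol\lambda^*,\mathbf{z}^* )$, where $\mathbf{x}^*$ is the unique optimal solution of (P).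
   Context: Problem (P): for $i=1,\dots,n$ let $f_i:\mathbb{R}^{d_i}\to\mathbb{R}$, $\mathcal{X}_i\subseteq\mathbb{R}^{d_i}$, $A_i\in\mathbb{R}^{p\times d_i}$, $b\in\mathbb{R}^p$; $d=\sum_i d_i$, $\mathbf{x}=[x_1^\top,\dots,x_n^\top]^\top$, $f(\mathbf{x})=\sum_i f_i(x_i)$, $A=[A_1,\dots,A_n]$, $\mathcal{X}=\prod_i\mathcal{X}_i$; (P) is $\min f(\mathbf{x})$ s.t. $A\mathbf{x}=b$, $\mathbf{x}\in\mathcal{X}$, assumed to have at least one optimal solution. Assumption 1: each $\mathcal{X}_i$ is closed and convex, $f_i$ is convex on $\mathcal{X}_i$ and differentiable on an open set containing $\mathcal{X}_i$ with $\nabla f_i$ locally Lipschitz there, and Slater's condition holds. $l_i$-smooth means $\nabla f_i$ is $l_i$-Lipschitz. Graph: weighted digraph with adjacency $[a_{ij}]$ ($a_{ij}>0$ if agent $i$ receives from agent $j$, else $0$); Laplacian $L=\mathrm{diag}(\sum_j a_{ij})_i-[a_{ij}]$; weight-balanced: $\sum_j a_{ji}=\sum_j a_{ij}$ for all $i$; strongly connected: directed path between any pair. $\hat L=(L+L^\top)/2$, $\eta_2(\hat L)$ its second smallest eigenvalue. IDEA: choose $b_1,\dots,b_n$ with $\sum_i b_i=b$; $\mathbf{A}=\mathrm{diag}(A_1,\dots,A_n)$, $\mathbf{b}=[b_1^\top,\dots,b_n^\top]^\top$, $\mathbf{L}=L\otimes I_p$, $\nabla f(\mathbf{x})=[\nabla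 f_1(x_1)^\top,\dots,\nabla f_n(x_n)^\top]^\top$. IDEA is $\dot{\mathbf{x}}=-\alpha(\nabla f(\mathbf{x})+\mathbf{A}^\top\boldsymbol\lambda)-\mathbf{A}^\top(\mathbf{A}\mathbf{x}-\mathbf{b}-\mathbf{z})$, $\dot{\boldsymbol\lambda}=\mathbf{A}\mathbf{x}-\mathbf{b}-\mathbf{z}-\beta\mathbf{L}\boldsymbol\lambda$, $\dot{\mathbf{z}}=\alpha\beta\mathbf{L}\boldsymbol\lambda$, with $\mathbf{z}=[z_1^\top,\dots,z_n^\top]^\top$. Exponential convergence means the distance to the limit is bounded by $Ce^{-ct}$ for some $C,c>0$. *)

theory Defs
  imports "HOL-Analysis.Analysis"
begin

definition strongly_convex_on :: "real \<Rightarrow> ('a::real_normed_vector) set \<Rightarrow> ('a \<Rightarrow> real) \<Rightarrow> bool" where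
  "strongly_convex_on mu S f \<longleftrightarrow> convex S \<and>
     (\<forall>x\<in>S. \<forall>y\<in>S. \<forall>t::real. 0 \<le> t \<and> t \<le> 1 \<longrightarrow>
        f (t *\<^sub>R x + (1 - t) *\<^sub>R y) \<le> t * f x + (1 - t) * f y - mu / 2 * t * (1 - t) * (norm (x - y))\<^sup>2)"

text \<open>Graph Laplacian of the weighted digraph with adjacency weights a (a i j > 0 iff i receives from j).\<close>
definition laplacian :: "('n::finite \<Rightarrow> 'n \<Rightarrow> real) \<Rightarrow> real^'n^'n" where
  "laplacian a = (\<chi> i j. (if i = j then (\<Sum>k\<in>UNIV. a i k) else 0) - a i j)"

definition weight_balanced :: "('n::finite \<Rightarrow> 'n \<Rightarrow> real) \<Rightarrow> bool" where
  "weight_balanced a \<longleftrightarrow> (\<forall>i. (\<Sum>j\<in>UNIV. a j i) = (\<Sum>j\<in>UNIV. a i j))"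

definition strongly_connected :: "('n::finite \<Rightarrow> 'n \<Rightarrow> real) \<Rightarrow> bool" where
  "strongly_connected a \<longleftrightarrow> (\<forall>i j. (j, i) \<in> {(u, v). a v u > 0}\<^sup>*)"

definition sym_part :: "real^'n^'n \<Rightarrow> real^'n^'n" where
  "sym_part M = (1/2) *\<^sub>R (M + transpose M)"

text \<open>Multiplicity of c as an eigenvalue of a (symmetric) matrix: dimension of its eigenspace
  (for symmetric matrices this coincides with the algebraic multiplicity).\<close>
definition eig_mult :: "real^'n^'n \<Rightarrow> real \<Rightarrow> nat" where
  "eig_mult M c = dim {v. M *v v = c *\<^sub>R v}"

definition is_eig :: "real^'n^'n \<Rightarrow> real \<Rightarrow> bool" where
  "is_eig M c \<longleftrightarrow> (\<exists>v. v \<noteq> 0 \<and> M *v v = c *\<^sub>R v)"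

text \<open>k-th smallest eigenvalue (counted with multiplicity) of a symmetric matrix:
  the least eigenvalue c such that the eigenvalues \<le> c have total multiplicity \<ge> k.\<close>
definition kth_eig :: "nat \<Rightarrow> real^'n^'n \<Rightarrow> real" where
  "kth_eig k M = Inf {c. is_eig M c \<and> k \<le> (\<Sum>d\<in>{d. is_eig M d \<and> d \<le> c}. eig_mult M d)}"

definition eta2 :: "real^'n^'n \<Rightarrow> real" where
  "eta2 M = kth_eig 2 M"

text \<open>Problem (P) with A_i = I_p, X_i = R^p: minimize sum f_i(x_i) s.t. sum x_i = b.\<close>
definition feasibleP :: "real^'p \<Rightarrow> real^'p^'n::finite \<Rightarrow> bool" where
  "feasibleP b x \<longleftrightarrow> (\<Sum>i\<in>UNIV. x $ i) = b"

definition optimalP :: "('n::finite \<Rightarrow> real^'p \<Rightarrow> real) \<Rightarrow> real^'p \<Rightarrow> real^'p^'n \<Rightarrow> bool" where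
  "optimalP f b x \<longleftrightarrow> feasibleP b x \<and>
     (\<forall>y. feasibleP b y \<longrightarrow> (\<Sum>i\<in>UNIV. f i (x $ i)) \<le> (\<Sum>i\<in>UNIV. f i (y $ i)))"

text \<open>(L \<otimes> I_p) applied to a stacked vector.\<close>
definition lap_apply :: "real^'n^'n \<Rightarrow> real^'p^'n::finite \<Rightarrow> real^'p^'n" where
  "lap_apply M v = (\<chi> i. \<Sum>j\<in>UNIV. (M $ i $ j) *\<^sub>R (v $ j))"

end

theory Submission
  imports Defs
begin

(* Let x* be the optimum and \<nu> the common value of the gradients of the f_i at x* (the multiplier
  of the coupling constraint). In the error coordinates X = x - x*, \<Lambda> = \<lambda> + \<nu>, Z = z - (x* - b) the
  dynamics read X' = -\<alpha> G - \<alpha> \<Lambda> - (X - Z), \<Lambda>' = (X - Z) - \<beta> L \<Lambda>, Z' = \<alpha> \<beta> L \<Lambda>, where the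
  gradient difference G is strongly monotone with modulus \<mu> and l-Lipschitz in X. The sum of the z_i
  is invariant, so Z stays in the disagreement subspace, on which the Laplacian form is at least
  \<eta>\<^sub>2 times the squared norm. With P the projection onto that subspace,
  V = |X|^2/2 + |Z + \<alpha> \<Lambda>|^2/(2\<alpha>) + \<alpha>|P \<Lambda>|^2/2 + \<epsilon> X \<bullet> \<Lambda> is equivalent to the squared distance and,
  for small \<epsilon> > 0, satisfies V' \<le> -r V once \<beta> \<eta>\<^sub>2 > 2\<alpha> + 1/(2\<mu>). The hypotheses on \<alpha> and \<beta>
  are only used through 4\<alpha>\<mu> > 1 and \<beta> \<eta>\<^sub>2 \<ge> 4\<alpha>, which imply this. *)

section \<open>Elementary inequalities and a comparison principle\<close>

lemma mult_le_weighted_sum_squares: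
  fixes a b s :: real
  assumes "s > 0"
  shows "a * b \<le> s / 2 * a\<^sup>2 + b\<^sup>2 / (2 * s)"
proof -
  have "0 \<le> (s * a - b)\<^sup>2 / (2 * s)" using assms by simp
  also have "\<dots> = s / 2 * a\<^sup>2 + b\<^sup>2 / (2 * s) - a * b"
    using assms by (simp add: power2_eq_square field_simps)
  finally show ?thesis by simp
qed

lemma inner_le_half_sum_squares: "x \<bullet> y \<le> (norm x)\<^sup>2 / 2 + (norm y)\<^sup>2 / 2"
  using norm_cauchy_schwarz[of x y] sum_squares_bound[of "norm x" "norm y"] by simp

lemma power2_norm_add_le: "(norm (x + y))\<^sup>2 \<le> 2 * (norm x)\<^sup>2 + 2 * (norm y)\<^sup>2"
proof -
  have "(norm (x + y))\<^sup>2 \<le> (norm x + norm y)\<^sup>2" by (simp add: norm_triangle_ineq power_mono)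
  then show ?thesis using sum_squares_bound[of "norm x" "norm y"] by (simp add: power2_sum)
qed

lemma has_real_derivative_inner:
  fixes f g :: "real \<Rightarrow> 'v::real_inner"
  assumes "(f has_vector_derivative f') (at t within S)" "(g has_vector_derivative g') (at t within S)"
  shows "((\<lambda>t. f t \<bullet> g t) has_real_derivative (f t \<bullet> g' + f' \<bullet> g t)) (at t within S)"
  using bounded_bilinear.has_vector_derivative[OF bounded_bilinear_inner assms]
  by (simp add: has_real_derivative_iff_has_vector_derivative)

lemma norm_le_exp_if_power2_le:
  assumes m: "0 < m" and V: "0 \<le> V" and le: "m * (norm v)\<^sup>2 \<le> V * exp (- r * t)"
  shows "norm v \<le> sqrt (V / m) * exp (- (r / 2) * t)"
proof (rule power2_le_imp_le)
  have "(norm v)\<^sup>2 \<le> V / m * exp (- r * t)"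
    using le m by (simp add: pos_le_divide_eq mult.commute)
  also have "\<dots> = (sqrt (V / m) * exp (- (r / 2) * t))\<^sup>2"
    using V m by (simp add: power_mult_distrib flip: exp_double)
  finally show "(norm v)\<^sup>2 \<le> (sqrt (V / m) * exp (- (r / 2) * t))\<^sup>2" .
  show "0 \<le> sqrt (V / m) * exp (- (r / 2) * t)" using V m by simp
qed

lemma exponential_decay_of_derivative_bound:
  fixes V V' :: "real \<Rightarrow> real"
  assumes deriv: "\<And>t. t \<ge> 0 \<Longrightarrow> (V has_real_derivative V' t) (at t within {0..})"
    and bound: "\<And>t. t \<ge> 0 \<Longrightarrow> V' t \<le> - r * V t"
    and t: "t \<ge> 0"
  shows "V t \<le> V 0 * exp (- r * t)"
proof -
  define F where "F s = V s * exp (r * s)" for s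
  have dF: "(F has_real_derivative (V' s + r * V s) * exp (r * s)) (at s within {0..})"
    if "s \<ge> 0" for s
    unfolding F_def by (auto intro!: derivative_eq_intros deriv[OF that] simp: algebra_simps)
  have "F t \<le> F 0"
  proof (rule DERIV_nonpos_imp_decreasing_open[OF t])
    fix s assume s: "0 < s" "s < t"
    then have "at s within {0..} = at s"
      by (intro at_within_interior) auto
    then have "(F has_real_derivative (V' s + r * V s) * exp (r * s)) (at s)"
      using dF[of s] s by simp
    moreover have "(V' s + r * V s) * exp (r * s) \<le> 0"
      using bound[of s] s by (intro mult_nonpos_nonneg) auto
    ultimately show "\<exists>y. (F has_real_derivative y) (at s) \<and> y \<le> 0" by blast
  next
    have "continuous_on {0..} F"
      using dF by (intro continuous_on_vector_derivative)
        (auto simp: has_real_derivative_iff_has_vector_derivative[symmetric])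
    then show "continuous_on {0..t} F" by (rule continuous_on_subset) auto
  qed
  then show ?thesis by (simp add: F_def exp_minus field_simps)
qed

section \<open>Strong convexity and the resource allocation problem\<close>

lemma has_real_derivative_along_line:
  assumes "(f has_derivative (\<lambda>h. g \<bullet> h)) (at x)"
  shows "((\<lambda>t. f (x + t *\<^sub>R d)) has_real_derivative (g \<bullet> d)) (at 0)"
proof -
  have "((\<lambda>t. x + t *\<^sub>R d) has_derivative (\<lambda>t. t *\<^sub>R d)) (at 0)"
    by (auto intro!: derivative_eq_intros)
  from has_derivative_compose[OF this, of f "\<lambda>h. g \<bullet> h"] assms
  show ?thesis by (simp add: has_field_derivative_def mult.commute[of _ "g \<bullet> d"])
qed

lemma strongly_convex_on_gradient_ineq:
  fixes f :: "'a::real_inner \<Rightarrow> real"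
  assumes grad: "(f has_derivative (\<lambda>h. g \<bullet> h)) (at x)"
    and convex: "strongly_convex_on \<mu> UNIV f"
  shows "f x + g \<bullet> (y - x) + \<mu> / 2 * (norm (y - x))\<^sup>2 \<le> f y"
proof -
  define d where "d = y - x"
  define \<phi> where "\<phi> t = f (x + t *\<^sub>R d)" for t
  have "((\<lambda>h. (\<phi> (0 + h) - \<phi> 0) / h) \<longlongrightarrow> g \<bullet> d) (at 0)"
    using has_real_derivative_along_line[OF grad] by (simp add: \<phi>_def has_field_derivative_iff)
  then have slope: "((\<lambda>t. (\<phi> t - \<phi> 0) / t) \<longlongrightarrow> g \<bullet> d) (at_right 0)"
    by (simp add: filterlim_at_split)
  have bound: "((\<lambda>t. f y - f x - \<mu> / 2 * (1 - t) * (norm d)\<^sup>2)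
      \<longlongrightarrow> f y - f x - \<mu> / 2 * (1 - 0) * (norm d)\<^sup>2) (at_right 0)"
    by (intro tendsto_intros)
  have "\<forall>\<^sub>F t in at_right 0. (\<phi> t - \<phi> 0) / t \<le> f y - f x - \<mu> / 2 * (1 - t) * (norm d)\<^sup>2"
    unfolding eventually_at_right[OF zero_less_one]
  proof (intro exI conjI allI impI)
    fix t :: real assume t: "0 < t" "t < 1"
    have "\<phi> t = f (t *\<^sub>R y + (1 - t) *\<^sub>R x)"
      by (simp add: \<phi>_def d_def algebra_simps)
    also have "\<dots> \<le> t * f y + (1 - t) * f x - \<mu> / 2 * t * (1 - t) * (norm d)\<^sup>2"
      using convex t unfolding strongly_convex_on_def d_def by auto
    finally have "\<phi> t - \<phi> 0 \<le> t * (f y - f x - \<mu> / 2 * (1 - t) * (norm d)\<^sup>2)"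
      by (simp add: \<phi>_def algebra_simps)
    then show "(\<phi> t - \<phi> 0) / t \<le> f y - f x - \<mu> / 2 * (1 - t) * (norm d)\<^sup>2"
      using t by (simp add: divide_le_eq mult.commute)
  qed simp
  from tendsto_le[OF trivial_limit_at_right_real bound slope this]
  show ?thesis by (simp add: d_def)
qed

lemma strongly_convex_on_gradient_monotone:
  fixes f :: "'a::real_inner \<Rightarrow> real"
  assumes grad: "\<And>u. (f has_derivative (\<lambda>h. g u \<bullet> h)) (at u)"
    and convex: "strongly_convex_on \<mu> UNIV f"
  shows "\<mu> * (norm (u - v))\<^sup>2 \<le> (g u - g v) \<bullet> (u - v)"
  using strongly_convex_on_gradient_ineq[OF grad convex, of u v]
    strongly_convex_on_gradient_ineq[OF grad convex, of v u]
  by (simp add: norm_minus_commute inner_diff_left inner_diff_right)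

lemma optimalP_gradients_eq:
  fixes f :: "'n::finite \<Rightarrow> real^'p \<Rightarrow> real"
  assumes grad: "\<And>i u. (f i has_derivative (\<lambda>h. gf i u \<bullet> h)) (at u)"
    and opt: "optimalP f b xs"
  shows "gf i (xs $ i) = gf j (xs $ j)"
proof (cases "i = j")
  case False
  define v where "v = gf i (xs $ i) - gf j (xs $ j)"
  \<comment> \<open>moving along d shifts v from agent j to agent i and keeps the point feasible\<close>
  define d :: "real^'p^'n" where "d = (\<chi> k. (if k = i then v else 0) - (if k = j then v else 0))"
  define h where "h t = (\<Sum>k\<in>UNIV. f k (xs $ k + t *\<^sub>R d $ k))" for t
  have "h 0 \<le> h t" for t
  proof -
    have "feasibleP b (xs + t *\<^sub>R d)"
      using opt by (simp add: optimalP_def feasibleP_def d_def sum.distrib sum_subtractf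
          scaleR_sum_right[symmetric])
    then have "(\<Sum>k\<in>UNIV. f k (xs $ k)) \<le> (\<Sum>k\<in>UNIV. f k ((xs + t *\<^sub>R d) $ k))"
      using opt unfolding optimalP_def by blast
    then show ?thesis by (simp add: h_def)
  qed
  moreover have "(h has_real_derivative (\<Sum>k\<in>UNIV. gf k (xs $ k) \<bullet> d $ k)) (at 0)"
    unfolding h_def by (intro DERIV_sum has_real_derivative_along_line grad)
  ultimately have "(\<Sum>k\<in>UNIV. gf k (xs $ k) \<bullet> d $ k) = 0"
    using DERIV_local_min[OF _ zero_less_one] by blast
  moreover have "(\<Sum>k\<in>UNIV. gf k (xs $ k) \<bullet> d $ k) = gf i (xs $ i) \<bullet> v - gf j (xs $ j) \<bullet> v"
    by (simp add: d_def inner_diff_right sum_subtractf if_distrib[of "\<lambda>x. _ \<bullet> x"] cong: if_cong)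
  ultimately have "v \<bullet> v = 0" by (simp add: v_def inner_diff_left)
  then show ?thesis by (simp add: v_def)
qed simp

lemma optimalP_unique:
  fixes f :: "'n::finite \<Rightarrow> real^'p \<Rightarrow> real"
  assumes grad: "\<And>i u. (f i has_derivative (\<lambda>h. gf i u \<bullet> h)) (at u)"
    and convex: "\<And>i. mu_i i > 0 \<and> strongly_convex_on (mu_i i) UNIV (f i)"
    and opt: "optimalP f b xs" and opt': "optimalP f b y"
  shows "y = xs"
proof -
  define \<nu> where "\<nu> = gf undefined (xs $ undefined)"
  define e where "e k = mu_i k / 2 * (norm (y $ k - xs $ k))\<^sup>2" for k
  have "gf k (xs $ k) = \<nu>" for k
    unfolding \<nu>_def by (rule optimalP_gradients_eq[OF grad opt])
  then have ineq: "f k (xs $ k) + \<nu> \<bullet> (y $ k - xs $ k) + e k \<le> f k (y $ k)" for k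
    using strongly_convex_on_gradient_ineq[OF grad convex[THEN conjunct2]] unfolding e_def by metis
  have "(\<Sum>k\<in>UNIV. \<nu> \<bullet> (y $ k - xs $ k)) = \<nu> \<bullet> ((\<Sum>k\<in>UNIV. y $ k) - (\<Sum>k\<in>UNIV. xs $ k))"
    by (simp add: inner_sum_right sum_subtractf inner_diff_right)
  also have "\<dots> = 0" using opt opt' by (simp add: optimalP_def feasibleP_def)
  finally have "(\<Sum>k\<in>UNIV. f k (xs $ k)) + (\<Sum>k\<in>UNIV. e k)
      = (\<Sum>k\<in>UNIV. f k (xs $ k) + \<nu> \<bullet> (y $ k - xs $ k) + e k)"
    by (simp add: sum.distrib)
  also have "\<dots> \<le> (\<Sum>k\<in>UNIV. f k (y $ k))" by (intro sum_mono ineq)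
  also have "\<dots> \<le> (\<Sum>k\<in>UNIV. f k (xs $ k))" using opt opt' by (simp add: optimalP_def)
  finally have "sum e UNIV \<le> 0" by simp
  moreover have "0 \<le> e k" for k using convex[of k] by (simp add: e_def)
  ultimately have e0: "e k = 0" for k by (metis antisym sum_nonneg sum_nonneg_eq_0_iff finite UNIV_I)
  have "y $ k = xs $ k" for k using e0[of k] convex[of k] by (simp add: e_def)
  then show ?thesis by (simp add: vec_eq_iff)
qed

section \<open>A Lyapunov function for the error dynamics\<close>

lemma dissipation_energy_le:
  fixes x w p l g y :: "'v::real_inner"
  assumes \<alpha>: "\<alpha> > 0" and \<mu>: "\<mu> > 0"
    and g: "\<mu> * (norm x)\<^sup>2 \<le> x \<bullet> g" and y: "\<rho> * (norm p)\<^sup>2 \<le> l \<bullet> y"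
  shows "- \<alpha> * (x \<bullet> g) - (norm w)\<^sup>2 + 2 * \<alpha> * (p \<bullet> w) - \<alpha> * (p \<bullet> x) - \<alpha> * (l \<bullet> y)
    \<le> - min (\<alpha> * \<mu> / 2) (min (1/2) (\<alpha> * (\<rho> - 2 * \<alpha> - 1 / (2 * \<mu>))))
        * ((norm x)\<^sup>2 + (norm w)\<^sup>2 + (norm p)\<^sup>2)"
proof -
  define X W Q where "X = norm x" and "W = norm w" and "Q = norm p"
  define c where "c = \<alpha> * (\<rho> - 2 * \<alpha> - 1 / (2 * \<mu>))"
  have "2 * \<alpha> * (p \<bullet> w) \<le> 2 * \<alpha> * (Q * W)"
    using mult_left_mono[OF norm_cauchy_schwarz[of p w]] \<alpha> by (simp add: Q_def W_def)
  also have "\<dots> = W * (2 * \<alpha> * Q)" by (simp add: algebra_simps)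
  also have "\<dots> \<le> 1 / 2 * W\<^sup>2 + (2 * \<alpha> * Q)\<^sup>2 / (2 * 1)"
    by (rule mult_le_weighted_sum_squares) simp
  finally have pw: "2 * \<alpha> * (p \<bullet> w) \<le> W\<^sup>2 / 2 + 2 * \<alpha>\<^sup>2 * Q\<^sup>2"
    by (simp add: power_mult_distrib mult.commute)
  have "- (p \<bullet> x) \<le> Q * X" using norm_cauchy_schwarz[of "- p" x] by (simp add: Q_def X_def)
  also have "\<dots> \<le> \<mu> / 2 * X\<^sup>2 + Q\<^sup>2 / (2 * \<mu>)"
    using mult_le_weighted_sum_squares[OF \<mu>, of X Q] by (simp add: mult.commute)
  finally have "- (p \<bullet> x) \<le> \<mu> / 2 * X\<^sup>2 + Q\<^sup>2 / (2 * \<mu>)" .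
  from mult_left_mono[OF this, of \<alpha>]
  have px: "- \<alpha> * (p \<bullet> x) \<le> \<alpha> * \<mu> * X\<^sup>2 / 2 + \<alpha> * Q\<^sup>2 / (2 * \<mu>)"
    using \<alpha> by (simp add: algebra_simps)
  have gx: "- \<alpha> * (x \<bullet> g) \<le> - (\<alpha> * \<mu> * X\<^sup>2)" and yl: "- \<alpha> * (l \<bullet> y) \<le> - (\<alpha> * \<rho> * Q\<^sup>2)"
    using mult_left_mono[OF g, of \<alpha>] mult_left_mono[OF y, of \<alpha>] \<alpha>
    by (simp_all add: X_def Q_def algebra_simps)
  have cQ: "c * Q\<^sup>2 = \<alpha> * \<rho> * Q\<^sup>2 - 2 * \<alpha>\<^sup>2 * Q\<^sup>2 - \<alpha> * Q\<^sup>2 / (2 * \<mu>)"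
    by (simp add: c_def power2_eq_square algebra_simps)
  define m where "m = min (\<alpha> * \<mu> / 2) (min (1/2) c)"
  have "m \<le> \<alpha> * \<mu> / 2" "m \<le> 1/2" "m \<le> c" by (simp_all add: m_def)
  from mult_right_mono[OF this(1), of "X\<^sup>2"] mult_right_mono[OF this(2), of "W\<^sup>2"]
    mult_right_mono[OF this(3), of "Q\<^sup>2"]
  have "m * X\<^sup>2 \<le> \<alpha> * \<mu> * X\<^sup>2 / 2" "m * W\<^sup>2 \<le> W\<^sup>2 / 2" "m * Q\<^sup>2 \<le> c * Q\<^sup>2"
    by simp_all
  then have "- \<alpha> * (x \<bullet> g) - W\<^sup>2 + 2 * \<alpha> * (p \<bullet> w) - \<alpha> * (p \<bullet> x) - \<alpha> * (l \<bullet> y)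
      \<le> - m * (X\<^sup>2 + W\<^sup>2 + Q\<^sup>2)"
    unfolding distrib_left minus_mult_left[symmetric] using pw px gx yl cQ by linarith
  then show ?thesis by (simp add: m_def c_def X_def W_def Q_def)
qed

lemma dissipation_cross_le:
  fixes x w p l g y :: "'v::real_inner"
  assumes \<alpha>: "\<alpha> > 0" and K: "K \<ge> 0"
    and g: "norm g \<le> L * norm x" and y: "norm y \<le> K * norm p"
  shows "x \<bullet> w - x \<bullet> y - \<alpha> * (g \<bullet> l) - \<alpha> * (norm l)\<^sup>2 - w \<bullet> l
    \<le> - \<alpha> / 2 * (norm l)\<^sup>2 + (\<alpha> * L\<^sup>2 + 1 / \<alpha> + 1 + K) * ((norm x)\<^sup>2 + (norm w)\<^sup>2 + (norm p)\<^sup>2)"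
proof -
  define X W Q N where "X = norm x" and "W = norm w" and "Q = norm p" and "N = norm l"
  have xw: "x \<bullet> w \<le> X\<^sup>2 / 2 + W\<^sup>2 / 2"
    unfolding X_def W_def by (rule inner_le_half_sum_squares)
  have "- (x \<bullet> y) \<le> X * (K * Q)"
    using norm_cauchy_schwarz[of "- x" y] mult_left_mono[OF y, of X] by (simp add: X_def Q_def)
  also have "\<dots> \<le> K * (X\<^sup>2 / 2 + Q\<^sup>2 / 2)"
    using mult_left_mono[OF sum_squares_bound[of X Q] K] by (simp add: algebra_simps)
  finally have xy: "- (x \<bullet> y) \<le> K * X\<^sup>2 / 2 + K * Q\<^sup>2 / 2" by (simp add: algebra_simps)
  have "- (g \<bullet> l) \<le> N * (L * X)"
    using norm_cauchy_schwarz[of "- g" l] mult_right_mono[OF g, of N] by (simp add: N_def X_def mult.commute)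
  also have "\<dots> \<le> (1/2) / 2 * N\<^sup>2 + (L * X)\<^sup>2 / (2 * (1/2))"
    by (rule mult_le_weighted_sum_squares) simp
  finally have "- (g \<bullet> l) \<le> N\<^sup>2 / 4 + L\<^sup>2 * X\<^sup>2" by (simp add: power_mult_distrib)
  from mult_left_mono[OF this, of \<alpha>]
  have gl: "- \<alpha> * (g \<bullet> l) \<le> \<alpha> * N\<^sup>2 / 4 + \<alpha> * L\<^sup>2 * X\<^sup>2" using \<alpha> by (simp add: algebra_simps)
  have "- (w \<bullet> l) \<le> N * W" using norm_cauchy_schwarz[of "- w" l] by (simp add: N_def W_def mult.commute)
  also have "\<dots> \<le> (\<alpha> / 2) / 2 * N\<^sup>2 + W\<^sup>2 / (2 * (\<alpha> / 2))"
    using \<alpha> by (intro mult_le_weighted_sum_squares) simp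
  finally have wl: "- (w \<bullet> l) \<le> \<alpha> * N\<^sup>2 / 4 + W\<^sup>2 / \<alpha>" by simp
  define K1 where "K1 = \<alpha> * L\<^sup>2 + 1 / \<alpha> + 1 + K"
  have "0 \<le> \<alpha> * L\<^sup>2" "0 < 1 / \<alpha>" using \<alpha> by simp_all
  then have "1/2 + K/2 + \<alpha> * L\<^sup>2 \<le> K1" "1/2 + 1/\<alpha> \<le> K1" "K/2 \<le> K1"
    unfolding K1_def using K by linarith+
  from mult_right_mono[OF this(1), of "X\<^sup>2"] mult_right_mono[OF this(2), of "W\<^sup>2"]
    mult_right_mono[OF this(3), of "Q\<^sup>2"]
  have "X\<^sup>2 / 2 + K * X\<^sup>2 / 2 + \<alpha> * L\<^sup>2 * X\<^sup>2 \<le> K1 * X\<^sup>2" "W\<^sup>2 / 2 + W\<^sup>2 / \<alpha> \<le> K1 * W\<^sup>2"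
    "K * Q\<^sup>2 / 2 \<le> K1 * Q\<^sup>2"
    by (simp_all add: algebra_simps)
  then have "x \<bullet> w - x \<bullet> y - \<alpha> * (g \<bullet> l) - \<alpha> * N\<^sup>2 - w \<bullet> l \<le> - \<alpha> / 2 * N\<^sup>2 + K1 * (X\<^sup>2 + W\<^sup>2 + Q\<^sup>2)"
    unfolding distrib_left using xw xy gl wl by linarith
  then show ?thesis by (simp add: K1_def X_def W_def Q_def N_def)
qed

locale orthogonal_projector =
  fixes P :: "'v::real_inner \<Rightarrow> 'v"
  assumes bounded_linear_P: "bounded_linear P"
    and self_adjoint: "\<And>v w. P v \<bullet> w = v \<bullet> P w"
    and idempotent: "\<And>v. P (P v) = P v"
begin

lemma linear_P: "linear P"
  using bounded_linear_P by (rule bounded_linear.linear)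

lemma inner_P_fixed: "P y = y \<Longrightarrow> y \<bullet> P v = y \<bullet> v"
  using self_adjoint[of y v] by simp

lemma inner_P_complement: "P y = y \<Longrightarrow> y \<bullet> (v - P v) = 0"
  by (simp add: inner_diff_right inner_P_fixed)

lemma power2_norm_split: "(norm v)\<^sup>2 = (norm (P v))\<^sup>2 + (norm (v - P v))\<^sup>2"
proof -
  have "P v \<bullet> (v - P v) = 0" by (rule inner_P_complement[OF idempotent])
  then have "(norm (P v + (v - P v)))\<^sup>2 = (norm (P v))\<^sup>2 + (norm (v - P v))\<^sup>2"
    by (rule norm_add_Pythagorean[unfolded orthogonal_def])
  then show ?thesis by simp
qed

lemma norm_P_le: "norm (P v) \<le> norm v"
proof -
  have "(norm (P v))\<^sup>2 \<le> (norm v)\<^sup>2" using power2_norm_split[of v] by simp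
  then show ?thesis by (rule power2_le_imp_le) simp
qed

text \<open>The cross term \<epsilon> x \<bullet> l makes the decrease strict also in the consensus direction of l,
  which the Laplacian does not damp.\<close>

definition lyapunov :: "real \<Rightarrow> real \<Rightarrow> 'v \<Rightarrow> 'v \<Rightarrow> 'v \<Rightarrow> real" where
  "lyapunov \<alpha> \<epsilon> x l z = (norm x)\<^sup>2 / 2 + (norm (z + \<alpha> *\<^sub>R l))\<^sup>2 / (2 * \<alpha>)
     + \<alpha> / 2 * (norm (P l))\<^sup>2 + \<epsilon> * (x \<bullet> l)"

definition lyapunov_deriv :: "real \<Rightarrow> real \<Rightarrow> 'v \<Rightarrow> 'v \<Rightarrow> 'v \<Rightarrow> 'v \<Rightarrow> 'v \<Rightarrow> 'v \<Rightarrow> real" where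
  "lyapunov_deriv \<alpha> \<epsilon> x l z x' l' z' = x \<bullet> x' + (z + \<alpha> *\<^sub>R l) \<bullet> (z' + \<alpha> *\<^sub>R l') / \<alpha>
     + \<alpha> * (P l \<bullet> P l') + \<epsilon> * (x \<bullet> l' + x' \<bullet> l)"

lemma has_real_derivative_lyapunov:
  assumes x: "(x has_vector_derivative x') (at t within S)"
    and l: "(l has_vector_derivative l') (at t within S)"
    and z: "(z has_vector_derivative z') (at t within S)"
  shows "((\<lambda>t. lyapunov \<alpha> \<epsilon> (x t) (l t) (z t)) has_real_derivative
      lyapunov_deriv \<alpha> \<epsilon> (x t) (l t) (z t) x' l' z') (at t within S)"
proof -
  have u: "((\<lambda>t. z t + \<alpha> *\<^sub>R l t) has_vector_derivative z' + \<alpha> *\<^sub>R l') (at t within S)"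
    by (intro has_vector_derivative_add z bounded_linear.has_vector_derivative[OF bounded_linear_scaleR_right l])
  have p: "((\<lambda>t. P (l t)) has_vector_derivative P l') (at t within S)"
    by (rule bounded_linear.has_vector_derivative[OF bounded_linear_P l])
  have "((\<lambda>t. (norm (x t))\<^sup>2 / 2) has_real_derivative x t \<bullet> x') (at t within S)"
    using DERIV_cdivide[OF has_real_derivative_inner[OF x x], of 2]
    by (simp add: power2_norm_eq_inner inner_commute)
  moreover have "((\<lambda>t. (norm (z t + \<alpha> *\<^sub>R l t))\<^sup>2 / (2 * \<alpha>)) has_real_derivative
      (z t + \<alpha> *\<^sub>R l t) \<bullet> (z' + \<alpha> *\<^sub>R l') / \<alpha>) (at t within S)"
    using DERIV_cdivide[OF has_real_derivative_inner[OF u u], of "2 * \<alpha>"]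
    by (simp add: power2_norm_eq_inner inner_commute)
  moreover have "((\<lambda>t. \<alpha> / 2 * (norm (P (l t)))\<^sup>2) has_real_derivative \<alpha> * (P (l t) \<bullet> P l'))
      (at t within S)"
    using DERIV_cmult[OF has_real_derivative_inner[OF p p], of "\<alpha> / 2"]
    by (simp add: power2_norm_eq_inner inner_commute)
  moreover have "((\<lambda>t. \<epsilon> * (x t \<bullet> l t)) has_real_derivative \<epsilon> * (x t \<bullet> l' + x' \<bullet> l t))
      (at t within S)"
    by (intro DERIV_cmult has_real_derivative_inner x l)
  ultimately show ?thesis
    unfolding lyapunov_def lyapunov_deriv_def by (intro DERIV_add)
qed

lemma lyapunov_lower_bound:
  assumes \<alpha>: "\<alpha> > 0" and \<epsilon>: "0 \<le> \<epsilon>" "\<epsilon> \<le> 1/2" "\<epsilon> \<le> \<alpha>/4" and z: "P z = z"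
  shows "min (1/4) (min (1/(8*\<alpha>)) (\<alpha>/8)) * ((norm x)\<^sup>2 + (norm l)\<^sup>2 + (norm z)\<^sup>2)
    \<le> lyapunov \<alpha> \<epsilon> x l z"
proof -
  define X L Z Q D S where "X = norm x" and "L = norm l" and "Z = norm z"
    and "Q = norm (P l)" and "D = norm (l - P l)" and "S = (norm (z + \<alpha> *\<^sub>R P l))\<^sup>2"
  have Pu: "P (z + \<alpha> *\<^sub>R l) = z + \<alpha> *\<^sub>R P l"
    using z linear_P by (simp add: linear_add linear_scale)
  have "(norm (z + \<alpha> *\<^sub>R l))\<^sup>2 = S + (norm (\<alpha> *\<^sub>R (l - P l)))\<^sup>2"
    using power2_norm_split[of "z + \<alpha> *\<^sub>R l"] unfolding Pu S_def
    by (simp add: scaleR_diff_right)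
  also have "\<dots> = S + \<alpha>\<^sup>2 * D\<^sup>2" by (simp add: D_def power_mult_distrib)
  finally have V: "lyapunov \<alpha> \<epsilon> x l z = X\<^sup>2 / 2 + S / (2 * \<alpha>) + \<alpha> * D\<^sup>2 / 2 + \<alpha> * Q\<^sup>2 / 2 + \<epsilon> * (x \<bullet> l)"
    using \<alpha> by (simp add: lyapunov_def X_def Q_def add_divide_distrib power2_eq_square)
  have "0 \<le> \<alpha> * D\<^sup>2" using \<alpha> by simp
  have LpD: "\<alpha> * L\<^sup>2 = \<alpha> * Q\<^sup>2 + \<alpha> * D\<^sup>2"
    using power2_norm_split[of l] by (simp add: L_def Q_def D_def distrib_left)
  have "Z\<^sup>2 \<le> 2 * S + 2 * \<alpha>\<^sup>2 * Q\<^sup>2"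
    using power2_norm_add_le[of "z + \<alpha> *\<^sub>R P l" "- \<alpha> *\<^sub>R P l"]
    by (simp add: Z_def S_def Q_def power_mult_distrib)
  then have Zb: "Z\<^sup>2 / (8 * \<alpha>) \<le> S / (4 * \<alpha>) + \<alpha> * Q\<^sup>2 / 4"
    using \<alpha> by (simp add: field_simps power2_eq_square)
  have S2: "S / (2 * \<alpha>) = S / (4 * \<alpha>) + S / (4 * \<alpha>)" "0 \<le> S / (4 * \<alpha>)"
    using \<alpha> by (simp_all add: S_def field_simps)
  have "- (x \<bullet> l) \<le> X\<^sup>2 / 2 + L\<^sup>2 / 2"
    using inner_le_half_sum_squares[of "- x" l] by (simp add: X_def L_def)
  from mult_left_mono[OF this \<epsilon>(1)]
  have xl: "- (\<epsilon> * (x \<bullet> l)) \<le> \<epsilon> * X\<^sup>2 / 2 + \<epsilon> * L\<^sup>2 / 2"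
    by (simp add: algebra_simps)
  have eX: "\<epsilon> * X\<^sup>2 \<le> X\<^sup>2 / 2" and eL: "\<epsilon> * L\<^sup>2 \<le> \<alpha> * L\<^sup>2 / 4"
    using mult_right_mono[OF \<epsilon>(2), of "X\<^sup>2"] mult_right_mono[OF \<epsilon>(3), of "L\<^sup>2"] by simp_all
  define m where "m = min (1/4) (min (1/(8*\<alpha>)) (\<alpha>/8))"
  have "m * X\<^sup>2 \<le> X\<^sup>2 / 4" "m * Z\<^sup>2 \<le> Z\<^sup>2 / (8 * \<alpha>)" "m * L\<^sup>2 \<le> \<alpha> * L\<^sup>2 / 8"
    using mult_right_mono[of m "1/4" "X\<^sup>2"] mult_right_mono[of m "1/(8*\<alpha>)" "Z\<^sup>2"]
      mult_right_mono[of m "\<alpha>/8" "L\<^sup>2"]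
    by (simp_all add: m_def)
  then have "m * (X\<^sup>2 + L\<^sup>2 + Z\<^sup>2) \<le> lyapunov \<alpha> \<epsilon> x l z"
    unfolding V distrib_left using LpD Zb S2 xl eX eL \<open>0 \<le> \<alpha> * D\<^sup>2\<close> by linarith
  then show ?thesis by (simp add: m_def X_def L_def Z_def)
qed

lemma lyapunov_upper_bound:
  assumes \<alpha>: "\<alpha> > 0" and \<epsilon>: "0 \<le> \<epsilon>" "\<epsilon> \<le> 1/2"
  shows "lyapunov \<alpha> \<epsilon> x l z \<le> (1 + 1/\<alpha> + 2*\<alpha>) * ((norm x)\<^sup>2 + (norm l)\<^sup>2 + (norm z)\<^sup>2)"
proof -
  define X L Z where "X = norm x" and "L = norm l" and "Z = norm z"
  have "(norm (z + \<alpha> *\<^sub>R l))\<^sup>2 \<le> 2 * Z\<^sup>2 + 2 * (\<alpha>\<^sup>2 * L\<^sup>2)"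
    using power2_norm_add_le[of z "\<alpha> *\<^sub>R l"] by (simp add: Z_def L_def power_mult_distrib)
  then have u: "(norm (z + \<alpha> *\<^sub>R l))\<^sup>2 / (2 * \<alpha>) \<le> Z\<^sup>2 / \<alpha> + \<alpha> * L\<^sup>2"
    using \<alpha> by (simp add: field_simps power2_eq_square)
  have p: "\<alpha> / 2 * (norm (P l))\<^sup>2 \<le> \<alpha> * L\<^sup>2 / 2"
    using \<alpha> norm_P_le[of l] by (simp add: L_def power_mono)
  have "x \<bullet> l \<le> X\<^sup>2 / 2 + L\<^sup>2 / 2"
    using inner_le_half_sum_squares[of x l] by (simp add: X_def L_def)
  from mult_left_mono[OF this \<epsilon>(1)]
  have xl: "\<epsilon> * (x \<bullet> l) \<le> \<epsilon> * X\<^sup>2 / 2 + \<epsilon> * L\<^sup>2 / 2" by (simp add: algebra_simps)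
  have eX: "\<epsilon> * X\<^sup>2 \<le> X\<^sup>2 / 2" and eL: "\<epsilon> * L\<^sup>2 \<le> L\<^sup>2 / 2"
    using mult_right_mono[OF \<epsilon>(2), of "X\<^sup>2"] mult_right_mono[OF \<epsilon>(2), of "L\<^sup>2"] by simp_all
  define M where "M = 1 + 1/\<alpha> + 2*\<alpha>"
  have "0 < 1/\<alpha>" using \<alpha> by simp
  then have "3/4 \<le> M" "1/\<alpha> \<le> M" "3/2 * \<alpha> + 1/4 \<le> M" unfolding M_def using \<alpha> by linarith+
  from mult_right_mono[OF this(1), of "X\<^sup>2"] mult_right_mono[OF this(2), of "Z\<^sup>2"]
    mult_right_mono[OF this(3), of "L\<^sup>2"]
  have "3/4 * X\<^sup>2 \<le> M * X\<^sup>2" "Z\<^sup>2 / \<alpha> \<le> M * Z\<^sup>2" "3/2 * (\<alpha> * L\<^sup>2) + L\<^sup>2 / 4 \<le> M * L\<^sup>2"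
    by (simp_all add: algebra_simps)
  then have "lyapunov \<alpha> \<epsilon> x l z \<le> M * (X\<^sup>2 + L\<^sup>2 + Z\<^sup>2)"
    unfolding lyapunov_def distrib_left X_def[symmetric] using u p xl eX eL by linarith
  then show ?thesis by (simp add: M_def X_def L_def Z_def)
qed

lemma lyapunov_le_error:
  assumes "\<alpha> > 0" "0 \<le> \<epsilon>" "\<epsilon> \<le> 1/2"
  shows "lyapunov \<alpha> \<epsilon> x l z
    \<le> 3 * (1 + 1/\<alpha> + 2*\<alpha>) * ((norm x)\<^sup>2 + (norm (x - z))\<^sup>2 + (norm l)\<^sup>2)"
proof -
  define M where "M = 1 + 1/\<alpha> + 2*\<alpha>"
  have "(norm z)\<^sup>2 \<le> 2 * (norm x)\<^sup>2 + 2 * (norm (x - z))\<^sup>2"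
    using power2_norm_add_le[of x "z - x"] by (simp add: norm_minus_commute)
  then have "(norm x)\<^sup>2 + (norm l)\<^sup>2 + (norm z)\<^sup>2 \<le> 3 * ((norm x)\<^sup>2 + (norm (x - z))\<^sup>2 + (norm l)\<^sup>2)"
    using zero_le_power2[of "norm l"] zero_le_power2[of "norm (x - z)"] unfolding distrib_left by linarith
  moreover have "M > 0" using assms by (simp add: M_def add_pos_pos)
  ultimately have "M * ((norm x)\<^sup>2 + (norm l)\<^sup>2 + (norm z)\<^sup>2)
      \<le> M * (3 * ((norm x)\<^sup>2 + (norm (x - z))\<^sup>2 + (norm l)\<^sup>2))"
    by (intro mult_left_mono) simp_all
  also have "\<dots> = 3 * M * ((norm x)\<^sup>2 + (norm (x - z))\<^sup>2 + (norm l)\<^sup>2)" by simp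
  finally show ?thesis using lyapunov_upper_bound[OF assms, of x l z] by (simp add: M_def)
qed

lemma lyapunov_deriv_error_dynamics:
  assumes \<alpha>: "\<alpha> \<noteq> 0" and z: "P z = z" and y: "P y = y"
  shows "lyapunov_deriv \<alpha> \<epsilon> x l z (- \<alpha> *\<^sub>R g - \<alpha> *\<^sub>R l - (x - z)) ((x - z) - y) (\<alpha> *\<^sub>R y)
    = (- \<alpha> * (x \<bullet> g) - (norm (x - z))\<^sup>2 + 2 * \<alpha> * (P l \<bullet> (x - z)) - \<alpha> * (P l \<bullet> x) - \<alpha> * (l \<bullet> y))
      + \<epsilon> * (x \<bullet> (x - z) - x \<bullet> y - \<alpha> * (g \<bullet> l) - \<alpha> * (norm l)\<^sup>2 - (x - z) \<bullet> l)"
proof -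
  define w where "w = x - z"
  have "\<alpha> *\<^sub>R y + \<alpha> *\<^sub>R (w - y) = \<alpha> *\<^sub>R w" by (simp add: algebra_simps)
  then have F1: "(z + \<alpha> *\<^sub>R l) \<bullet> (\<alpha> *\<^sub>R y + \<alpha> *\<^sub>R (w - y)) / \<alpha> = (z + \<alpha> *\<^sub>R l) \<bullet> w"
    using \<alpha> by simp
  have F2: "P l \<bullet> P (w - y) = P l \<bullet> w - l \<bullet> y"
    using linear_diff[OF linear_P] y by (simp add: inner_diff_right self_adjoint idempotent)
  have F3: "(- \<alpha> *\<^sub>R g - \<alpha> *\<^sub>R l - w) \<bullet> l = - \<alpha> * (g \<bullet> l) - \<alpha> * (norm l)\<^sup>2 - w \<bullet> l"
    by (simp add: inner_diff_left power2_norm_eq_inner)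
  have "lyapunov_deriv \<alpha> \<epsilon> x l z (- \<alpha> *\<^sub>R g - \<alpha> *\<^sub>R l - w) (w - y) (\<alpha> *\<^sub>R y)
      = x \<bullet> (- \<alpha> *\<^sub>R g - \<alpha> *\<^sub>R l - w) + (z + \<alpha> *\<^sub>R l) \<bullet> w + \<alpha> * (P l \<bullet> w) - \<alpha> * (l \<bullet> y)
        + \<epsilon> * (x \<bullet> w - x \<bullet> y - \<alpha> * (g \<bullet> l) - \<alpha> * (norm l)\<^sup>2 - w \<bullet> l)"
    unfolding lyapunov_deriv_def F1 F2 F3 by (simp add: algebra_simps)
  moreover have "x \<bullet> (- \<alpha> *\<^sub>R g - \<alpha> *\<^sub>R l - w) + (z + \<alpha> *\<^sub>R l) \<bullet> w
      = - \<alpha> * (x \<bullet> g) - (norm w)\<^sup>2 - \<alpha> * (l \<bullet> z)"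
    by (simp add: w_def power2_norm_eq_inner inner_commute algebra_simps)
  moreover have "\<alpha> * (l \<bullet> z) = \<alpha> * (P l \<bullet> x) - \<alpha> * (P l \<bullet> w)"
    using z self_adjoint[of l z] by (simp add: w_def inner_diff_right right_diff_distrib)
  ultimately show ?thesis unfolding w_def[symmetric] by linarith
qed

lemma lyapunov_deriv_error_dynamics_le:
  assumes \<alpha>: "\<alpha> > 0" and \<mu>: "\<mu> > 0" and K: "K \<ge> 0" and \<epsilon>: "0 \<le> \<epsilon>" and "0 \<le> c"
    and c: "c \<le> min (\<alpha> * \<mu> / 2) (min (1/2) (\<alpha> * (\<rho> - 2 * \<alpha> - 1 / (2 * \<mu>))))"
    and \<epsilon>c: "\<epsilon> * (\<alpha> * L\<^sup>2 + 1 / \<alpha> + 1 + K) \<le> c / 2"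
    and z: "P z = z" and y: "P y = y" and g: "\<mu> * (norm x)\<^sup>2 \<le> x \<bullet> g" "norm g \<le> L * norm x"
    and ly: "\<rho> * (norm (P l))\<^sup>2 \<le> l \<bullet> y" "norm y \<le> K * norm (P l)"
  shows "lyapunov_deriv \<alpha> \<epsilon> x l z (- \<alpha> *\<^sub>R g - \<alpha> *\<^sub>R l - (x - z)) ((x - z) - y) (\<alpha> *\<^sub>R y)
    \<le> - min (c / 2) (\<epsilon> * \<alpha> / 2) * ((norm x)\<^sup>2 + (norm (x - z))\<^sup>2 + (norm l)\<^sup>2)"
proof -
  define X W Q N where "X = (norm x)\<^sup>2" and "W = (norm (x - z))\<^sup>2" and "Q = (norm (P l))\<^sup>2"
    and "N = (norm l)\<^sup>2"
  define r where "r = min (c / 2) (\<epsilon> * \<alpha> / 2)"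
  have nonneg: "0 \<le> X" "0 \<le> W" "0 \<le> N" "0 \<le> Q" by (simp_all add: X_def W_def N_def Q_def)
  have "x \<bullet> (x - z) - x \<bullet> y - \<alpha> * (g \<bullet> l) - \<alpha> * N - (x - z) \<bullet> l
      \<le> - \<alpha> / 2 * N + (\<alpha> * L\<^sup>2 + 1 / \<alpha> + 1 + K) * (X + W + Q)"
    using dissipation_cross_le[OF \<alpha> K g(2) ly(2), of "x - z" l] by (simp add: X_def W_def Q_def N_def)
  from mult_left_mono[OF this \<epsilon>]
  have "\<epsilon> * (x \<bullet> (x - z) - x \<bullet> y - \<alpha> * (g \<bullet> l) - \<alpha> * N - (x - z) \<bullet> l)
      \<le> - (\<epsilon> * \<alpha> / 2 * N) + \<epsilon> * (\<alpha> * L\<^sup>2 + 1 / \<alpha> + 1 + K) * (X + W + Q)"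
    by (simp add: algebra_simps)
  also have "\<dots> \<le> - (\<epsilon> * \<alpha> / 2 * N) + c / 2 * (X + W + Q)"
    using mult_right_mono[OF \<epsilon>c, of "X + W + Q"] nonneg by simp
  finally have cross: "\<epsilon> * (x \<bullet> (x - z) - x \<bullet> y - \<alpha> * (g \<bullet> l) - \<alpha> * N - (x - z) \<bullet> l)
      \<le> - (\<epsilon> * \<alpha> / 2 * N) + c / 2 * X + c / 2 * W + c / 2 * Q"
    by (simp add: distrib_left)
  have "- \<alpha> * (x \<bullet> g) - W + 2 * \<alpha> * (P l \<bullet> (x - z)) - \<alpha> * (P l \<bullet> x) - \<alpha> * (l \<bullet> y)
      \<le> - min (\<alpha> * \<mu> / 2) (min (1/2) (\<alpha> * (\<rho> - 2 * \<alpha> - 1 / (2 * \<mu>)))) * (X + W + Q)"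
    using dissipation_energy_le[OF \<alpha> \<mu> g(1) ly(1), of "x - z"] by (simp add: X_def W_def Q_def)
  also have "\<dots> \<le> - c * (X + W + Q)" using c nonneg by (simp add: mult_right_mono)
  finally have energy: "- \<alpha> * (x \<bullet> g) - W + 2 * \<alpha> * (P l \<bullet> (x - z)) - \<alpha> * (P l \<bullet> x) - \<alpha> * (l \<bullet> y)
      \<le> - (c * X) - c * W - c * Q" by (simp add: algebra_simps)
  have "r \<le> c / 2" "r \<le> \<epsilon> * \<alpha> / 2" by (simp_all add: r_def)
  from mult_right_mono[OF this(1) nonneg(1)] mult_right_mono[OF this(1) nonneg(2)]
    mult_right_mono[OF this(2) nonneg(3)]
  have "r * X \<le> c / 2 * X" "r * W \<le> c / 2 * W" "r * N \<le> \<epsilon> * \<alpha> / 2 * N" by simp_all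
  moreover have "0 \<le> c / 2 * Q" using \<open>0 \<le> c\<close> nonneg(4) by simp
  moreover have "lyapunov_deriv \<alpha> \<epsilon> x l z (- \<alpha> *\<^sub>R g - \<alpha> *\<^sub>R l - (x - z)) ((x - z) - y) (\<alpha> *\<^sub>R y)
    = (- \<alpha> * (x \<bullet> g) - W + 2 * \<alpha> * (P l \<bullet> (x - z)) - \<alpha> * (P l \<bullet> x) - \<alpha> * (l \<bullet> y))
      + \<epsilon> * (x \<bullet> (x - z) - x \<bullet> y - \<alpha> * (g \<bullet> l) - \<alpha> * N - (x - z) \<bullet> l)"
    unfolding W_def N_def using \<alpha> z y by (intro lyapunov_deriv_error_dynamics) simp_all
  ultimately show ?thesis
    unfolding r_def[symmetric] X_def[symmetric] W_def[symmetric] N_def[symmetric] distrib_left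
    using cross energy by linarith
qed

lemma lyapunov_strict_decrease:
  assumes \<alpha>: "\<alpha> > 0" and \<mu>: "\<mu> > 0" and K: "K \<ge> 0" and \<rho>: "\<rho> > 2 * \<alpha> + 1 / (2 * \<mu>)"
  obtains \<epsilon> r where "0 < \<epsilon>" "\<epsilon> \<le> 1/2" "\<epsilon> \<le> \<alpha>/4" "0 < r"
    "\<And>x l z g y. P z = z \<Longrightarrow> P y = y \<Longrightarrow> \<mu> * (norm x)\<^sup>2 \<le> x \<bullet> g \<Longrightarrow> norm g \<le> L * norm x \<Longrightarrow>
      \<rho> * (norm (P l))\<^sup>2 \<le> l \<bullet> y \<Longrightarrow> norm y \<le> K * norm (P l) \<Longrightarrow>
      lyapunov_deriv \<alpha> \<epsilon> x l z (- \<alpha> *\<^sub>R g - \<alpha> *\<^sub>R l - (x - z)) ((x - z) - y) (\<alpha> *\<^sub>R y)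
        \<le> - r * lyapunov \<alpha> \<epsilon> x l z"
proof -
  define c where "c = min (\<alpha> * \<mu> / 2) (min (1/2) (\<alpha> * (\<rho> - 2 * \<alpha> - 1 / (2 * \<mu>))))"
  define K1 where "K1 = \<alpha> * L\<^sup>2 + 1 / \<alpha> + 1 + K"
  define \<epsilon> where "\<epsilon> = min (c / (2 * K1)) (min (1/2) (\<alpha>/4))"
  define r0 where "r0 = min (c / 2) (\<epsilon> * \<alpha> / 2)"
  define M where "M = 3 * (1 + 1/\<alpha> + 2*\<alpha>)"
  have c: "c > 0" using \<alpha> \<mu> \<rho> by (simp add: c_def)
  have "0 \<le> \<alpha> * L\<^sup>2" "0 < 1 / \<alpha>" using \<alpha> by simp_all
  then have K1: "K1 > 0" using K unfolding K1_def by linarith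
  have \<epsilon>: "0 < \<epsilon>" "\<epsilon> \<le> 1/2" "\<epsilon> \<le> \<alpha>/4" using c K1 \<alpha> by (simp_all add: \<epsilon>_def)
  have "\<epsilon> * K1 \<le> c / (2 * K1) * K1" using K1 by (intro mult_right_mono) (simp_all add: \<epsilon>_def)
  then have \<epsilon>K1: "\<epsilon> * K1 \<le> c / 2" using K1 by simp
  have r0: "r0 > 0" using c \<epsilon> \<alpha> by (simp add: r0_def)
  have M: "M > 0" using \<alpha> by (simp add: M_def add_pos_pos)
  show ?thesis
  proof (rule that[OF \<epsilon>, of "r0 / M"])
    show "0 < r0 / M" using r0 M by simp
    fix x l z g y :: 'v
    assume "P z = z" "P y = y" "\<mu> * (norm x)\<^sup>2 \<le> x \<bullet> g" "norm g \<le> L * norm x"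
      "\<rho> * (norm (P l))\<^sup>2 \<le> l \<bullet> y" "norm y \<le> K * norm (P l)"
    from lyapunov_deriv_error_dynamics_le[OF \<alpha> \<mu> K _ _ _ \<epsilon>K1[unfolded K1_def] this] \<epsilon> c
    have "lyapunov_deriv \<alpha> \<epsilon> x l z (- \<alpha> *\<^sub>R g - \<alpha> *\<^sub>R l - (x - z)) ((x - z) - y) (\<alpha> *\<^sub>R y)
        \<le> - r0 * ((norm x)\<^sup>2 + (norm (x - z))\<^sup>2 + (norm l)\<^sup>2)"
      by (simp add: r0_def c_def)
    moreover have "r0 / M * lyapunov \<alpha> \<epsilon> x l z \<le> r0 / M * (M * ((norm x)\<^sup>2 + (norm (x - z))\<^sup>2 + (norm l)\<^sup>2))"
      using lyapunov_le_error[OF \<alpha> _ \<epsilon>(2), of x l z] \<epsilon> r0 M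
      by (intro mult_left_mono) (simp_all add: M_def)
    ultimately show "lyapunov_deriv \<alpha> \<epsilon> x l z (- \<alpha> *\<^sub>R g - \<alpha> *\<^sub>R l - (x - z)) ((x - z) - y) (\<alpha> *\<^sub>R y)
        \<le> - (r0 / M) * lyapunov \<alpha> \<epsilon> x l z"
      using M by simp
  qed
qed

lemma error_dynamics_exponential_decay:
  fixes X Lm Z G Y :: "real \<Rightarrow> 'v"
  assumes \<alpha>: "\<alpha> > 0" and \<mu>: "\<mu> > 0" and K: "K \<ge> 0" and \<rho>: "\<rho> > 2 * \<alpha> + 1 / (2 * \<mu>)"
    and dX: "\<And>t. t \<ge> 0 \<Longrightarrow>
      (X has_vector_derivative - \<alpha> *\<^sub>R G t - \<alpha> *\<^sub>R Lm t - (X t - Z t)) (at t within {0..})"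
    and dLm: "\<And>t. t \<ge> 0 \<Longrightarrow> (Lm has_vector_derivative (X t - Z t) - Y t) (at t within {0..})"
    and dZ: "\<And>t. t \<ge> 0 \<Longrightarrow> (Z has_vector_derivative \<alpha> *\<^sub>R Y t) (at t within {0..})"
    and Z: "\<And>t. t \<ge> 0 \<Longrightarrow> P (Z t) = Z t" and Y: "\<And>t. t \<ge> 0 \<Longrightarrow> P (Y t) = Y t"
    and G: "\<And>t. t \<ge> 0 \<Longrightarrow> \<mu> * (norm (X t))\<^sup>2 \<le> X t \<bullet> G t"
      "\<And>t. t \<ge> 0 \<Longrightarrow> norm (G t) \<le> L * norm (X t)"
    and LmY: "\<And>t. t \<ge> 0 \<Longrightarrow> \<rho> * (norm (P (Lm t)))\<^sup>2 \<le> Lm t \<bullet> Y t"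
      "\<And>t. t \<ge> 0 \<Longrightarrow> norm (Y t) \<le> K * norm (P (Lm t))"
  obtains C c where "C > 0" "c > 0" "\<And>t. t \<ge> 0 \<Longrightarrow> norm (X t, Lm t, Z t) \<le> C * exp (- c * t)"
proof -
  obtain \<epsilon> r where \<epsilon>: "0 < \<epsilon>" "\<epsilon> \<le> 1/2" "\<epsilon> \<le> \<alpha>/4" and r: "0 < r"
    and decrease: "\<And>x l z g y. P z = z \<Longrightarrow> P y = y \<Longrightarrow> \<mu> * (norm x)\<^sup>2 \<le> x \<bullet> g \<Longrightarrow>
      norm g \<le> L * norm x \<Longrightarrow> \<rho> * (norm (P l))\<^sup>2 \<le> l \<bullet> y \<Longrightarrow> norm y \<le> K * norm (P l) \<Longrightarrow>
      lyapunov_deriv \<alpha> \<epsilon> x l z (- \<alpha> *\<^sub>R g - \<alpha> *\<^sub>R l - (x - z)) ((x - z) - y) (\<alpha> *\<^sub>R y)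
        \<le> - r * lyapunov \<alpha> \<epsilon> x l z"
    using lyapunov_strict_decrease[OF \<alpha> \<mu> K \<rho>] by metis
  define V where "V t = lyapunov \<alpha> \<epsilon> (X t) (Lm t) (Z t)" for t
  define m where "m = min (1/4) (min (1/(8*\<alpha>)) (\<alpha>/8))"
  have m: "m > 0" using \<alpha> by (simp add: m_def)
  have decay: "V t \<le> V 0 * exp (- r * t)" if "t \<ge> 0" for t
  proof (rule exponential_decay_of_derivative_bound[OF _ _ that])
    fix s :: real assume s: "s \<ge> 0"
    show "(V has_real_derivative lyapunov_deriv \<alpha> \<epsilon> (X s) (Lm s) (Z s)
        (- \<alpha> *\<^sub>R G s - \<alpha> *\<^sub>R Lm s - (X s - Z s)) (X s - Z s - Y s) (\<alpha> *\<^sub>R Y s)) (at s within {0..})"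
      unfolding V_def by (rule has_real_derivative_lyapunov[OF dX[OF s] dLm[OF s] dZ[OF s]])
    show "lyapunov_deriv \<alpha> \<epsilon> (X s) (Lm s) (Z s)
        (- \<alpha> *\<^sub>R G s - \<alpha> *\<^sub>R Lm s - (X s - Z s)) (X s - Z s - Y s) (\<alpha> *\<^sub>R Y s) \<le> - r * V s"
      unfolding V_def by (rule decrease[OF Z[OF s] Y[OF s] G[OF s] LmY[OF s]])
  qed
  have lower: "m * (norm (X t, Lm t, Z t))\<^sup>2 \<le> V t" if "t \<ge> 0" for t
    using lyapunov_lower_bound[OF \<alpha> _ \<epsilon>(2,3) Z[OF that], of "X t" "Lm t"] \<epsilon>(1)
    by (simp add: V_def m_def norm_Pair add.assoc)
  have "0 \<le> m * (norm (X 0, Lm 0, Z 0))\<^sup>2" using m by simp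
  then have V0: "0 \<le> V 0" using lower[of 0] by linarith
  show ?thesis
  \<comment> \<open>the summand 1 keeps the constant positive when V 0 = 0\<close>
  proof (rule that[of "sqrt (V 0 / m) + 1" "r / 2"])
    show "sqrt (V 0 / m) + 1 > 0" using V0 m by (simp add: add_nonneg_pos)
    show "r / 2 > 0" using r by simp
    fix t :: real assume t: "t \<ge> 0"
    have "norm (X t, Lm t, Z t) \<le> sqrt (V 0 / m) * exp (- (r / 2) * t)"
      by (rule norm_le_exp_if_power2_le[OF m V0 order_trans[OF lower[OF t] decay[OF t]]])
    also have "\<dots> \<le> (sqrt (V 0 / m) + 1) * exp (- (r / 2) * t)" by simp
    finally show "norm (X t, Lm t, Z t) \<le> (sqrt (V 0 / m) + 1) * exp (- (r / 2) * t)" .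
  qed
qed

end

section \<open>Symmetric matrices and the second smallest eigenvalue\<close>

lemma inner_matrix_vector_transpose: "(M *v u) \<bullet> w = u \<bullet> (transpose M *v w)"
  for M :: "real^'n^'m"
  by (metis dot_lmul_matrix vector_transpose_matrix)

lemma inner_matrix_vector_symmetric:
  fixes M :: "real^'n^'n"
  assumes "transpose M = M"
  shows "(M *v u) \<bullet> w = u \<bullet> (M *v w)"
  using inner_matrix_vector_transpose[of M u w] assms by simp

lemma transpose_sym_part: "transpose (sym_part M) = sym_part M"
  by (simp add: sym_part_def transpose_def vec_eq_iff)

lemma inner_sym_part: "u \<bullet> (sym_part M *v u) = u \<bullet> (M *v u)"
proof -
  have "u \<bullet> (transpose M *v u) = u \<bullet> (M *v u)"
    by (metis inner_commute inner_matrix_vector_transpose)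
  then show ?thesis
    by (simp add: sym_part_def inner_add_right matrix_vector_mult_add_rdistrib
        flip: scaleR_matrix_vector_assoc)
qed

lemma symmetric_eigenvalues_finite:
  fixes M :: "real^'n^'n"
  assumes sym: "transpose M = M"
  shows "finite {c. is_eig M c}"
proof -
  define E where "E = {c. is_eig M c}"
  define ev where "ev c = (SOME v. v \<noteq> 0 \<and> M *v v = c *\<^sub>R v)" for c
  have ev: "ev c \<noteq> 0" "M *v ev c = c *\<^sub>R ev c" if "c \<in> E" for c
    using someI_ex[of "\<lambda>v. v \<noteq> 0 \<and> M *v v = c *\<^sub>R v"] that by (auto simp: E_def is_eig_def ev_def)
  have orth: "ev c \<bullet> ev d = 0" if "c \<in> E" "d \<in> E" "c \<noteq> d" for c d
  proof -
    have "c * (ev c \<bullet> ev d) = d * (ev c \<bullet> ev d)"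
      using inner_matrix_vector_symmetric[OF sym, of "ev c" "ev d"] ev[OF that(1)] ev[OF that(2)] by simp
    then show ?thesis using that(3) by simp
  qed
  have inj: "inj_on ev E"
  proof (rule inj_onI)
    fix c d assume "c \<in> E" "d \<in> E" "ev c = ev d"
    then show "c = d" using orth[of c d] ev by fastforce
  qed
  have "pairwise orthogonal (ev ` E)"
    unfolding pairwise_def orthogonal_def using orth by (metis imageE)
  moreover have "0 \<notin> ev ` E" using ev by auto
  ultimately have "independent (ev ` E)" by (rule pairwise_orthogonal_independent)
  then have "finite (ev ` E)" using independent_bound by blast
  then show ?thesis using inj finite_imageD unfolding E_def by blast
qed

lemma is_eig_imp_eig_mult_pos:
  assumes "is_eig M c"
  shows "1 \<le> eig_mult M c"
proof -
  obtain v where v: "v \<noteq> 0" "M *v v = c *\<^sub>R v" using assms by (auto simp: is_eig_def)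
  have "card {v} \<le> dim {v. M *v v = c *\<^sub>R v}"
    by (rule independent_card_le_dim) (use v in \<open>auto intro: pairwise_orthogonal_independent\<close>)
  then show ?thesis by (simp add: eig_mult_def)
qed

lemma linear_coeff_eq_0_if_quadratic_nonneg:
  fixes A B :: real
  assumes "\<And>t. 0 \<le> 2 * t * B + t\<^sup>2 * A"
  shows "B = 0"
proof -
  have "((\<lambda>t. 2 * t * B + t\<^sup>2 * A) has_real_derivative 2 * B) (at 0)"
    by (auto intro!: derivative_eq_intros)
  from DERIV_local_min[OF this zero_less_one] show ?thesis using assms by simp
qed

lemma rayleigh_minimum_on_orthogonal_complement:
  fixes M :: "real^'n^'n" and e :: "real^'n"
  assumes sym: "transpose M = M" and Me: "M *v e = 0" and u0: "u0 \<noteq> 0" "u0 \<bullet> e = 0"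
  obtains c v where "v \<noteq> 0" "v \<bullet> e = 0" "M *v v = c *\<^sub>R v"
    "\<And>u. u \<bullet> e = 0 \<Longrightarrow> c * (norm u)\<^sup>2 \<le> u \<bullet> (M *v u)"
proof -
  define S where "S = {u. u \<bullet> e = 0} \<inter> sphere 0 1"
  define q where "q u = u \<bullet> (M *v u)" for u
  have "closed {u. u \<bullet> e = 0}" by (intro closed_Collect_eq continuous_intros)
  then have "compact S" unfolding S_def by (intro closed_Int_compact) simp_all
  moreover have "(1 / norm u0) *\<^sub>R u0 \<in> S" using u0 by (simp add: S_def)
  moreover have "continuous_on S q"
    unfolding q_def by (intro continuous_intros linear_continuous_on matrix_vector_mul_bounded_linear)
  ultimately obtain v where v: "v \<in> S" and min: "\<And>u. u \<in> S \<Longrightarrow> q v \<le> q u"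
    using continuous_attains_inf[of S q] by blast
  have ve: "v \<bullet> e = 0" and vv: "v \<bullet> v = 1" using v by (auto simp: S_def dot_square_norm)
  have bound: "q v * (norm u)\<^sup>2 \<le> q u" if "u \<bullet> e = 0" for u
  proof (cases "u = 0")
    case False
    then have "q v \<le> q ((1 / norm u) *\<^sub>R u)" using that by (intro min) (simp add: S_def)
    then show ?thesis using False by (simp add: q_def matrix_vector_mult_scaleR field_simps power2_eq_square)
  qed (simp add: q_def)
  \<comment> \<open>first variation of the Rayleigh quotient at the minimiser v in the direction w\<close>
  define w where "w = M *v v - q v *\<^sub>R v"
  have we: "w \<bullet> e = 0"
    using inner_matrix_vector_symmetric[OF sym, of v e] Me ve by (simp add: w_def inner_diff_left)
  have vw: "v \<bullet> w = 0" by (simp add: w_def q_def inner_diff_right vv)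
  have "M *v v = w + q v *\<^sub>R v" by (simp add: w_def)
  then have wMv: "w \<bullet> (M *v v) = w \<bullet> w" using vw by (simp add: inner_add_right inner_commute)
  have "0 \<le> 2 * t * (w \<bullet> w) + t\<^sup>2 * (q w - q v * (w \<bullet> w))" for t
  proof -
    have "q (v + t *\<^sub>R w) = q v + 2 * t * (w \<bullet> w) + t\<^sup>2 * q w"
      using inner_matrix_vector_symmetric[OF sym, of v w] wMv
      by (simp add: q_def inner_commute power2_eq_square algebra_simps)
    moreover have "(norm (v + t *\<^sub>R w))\<^sup>2 = 1 + t\<^sup>2 * (w \<bullet> w)"
      unfolding power2_norm_eq_inner
      by (simp add: inner_add_left inner_add_right vv vw inner_commute power2_eq_square)
    moreover have "q v * (norm (v + t *\<^sub>R w))\<^sup>2 \<le> q (v + t *\<^sub>R w)"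
      using ve we by (intro bound) (simp add: inner_add_left)
    ultimately show ?thesis by (simp add: algebra_simps)
  qed
  then have "w \<bullet> w = 0" by (rule linear_coeff_eq_0_if_quadratic_nonneg)
  then have "M *v v = q v *\<^sub>R v" by (simp add: w_def)
  moreover have "v \<noteq> 0" using vv by auto
  ultimately show ?thesis using that ve bound unfolding q_def by blast
qed

lemma eta2_pos_le_eigenvalue:
  fixes M :: "real^'n^'n"
  assumes sym: "transpose M = M" and nonneg: "\<And>d. is_eig M d \<Longrightarrow> 0 \<le> d"
    and zero: "is_eig M 0" "eig_mult M 0 \<le> 1" and c: "is_eig M c" "0 < c"
  shows "0 < eta2 M" and "eta2 M \<le> c"
proof -
  define mult_le where "mult_le c = (\<Sum>d\<in>{d. is_eig M d \<and> d \<le> c}. eig_mult M d)" for c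
  define S where "S = {c. is_eig M c \<and> 2 \<le> mult_le c}"
  have fin: "finite {d. is_eig M d \<and> d \<le> c}" for c
    using symmetric_eigenvalues_finite[OF sym] by (rule finite_subset[rotated]) auto
  have "finite S" using symmetric_eigenvalues_finite[OF sym] by (rule finite_subset[rotated]) (auto simp: S_def)
  have "eig_mult M 0 + eig_mult M c \<le> mult_le c"
    using sum_mono2[OF fin[of c], of "{0, c}" "eig_mult M"] zero c by (simp add: mult_le_def)
  then have "c \<in> S" using is_eig_imp_eig_mult_pos[OF zero(1)] is_eig_imp_eig_mult_pos[OF c(1)] c
    by (simp add: S_def)
  have pos: "0 < s" if "s \<in> S" for s
  proof (rule ccontr)
    assume "\<not> 0 < s"
    then have "{d. is_eig M d \<and> d \<le> s} \<subseteq> {0}" using nonneg by force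
    then have "mult_le s \<le> eig_mult M 0"
      using sum_mono2[of "{0}" "{d. is_eig M d \<and> d \<le> s}" "eig_mult M"] by (simp add: mult_le_def)
    then show False using that zero(2) by (simp add: S_def)
  qed
  have "eta2 M = Inf S" by (simp add: eta2_def kth_eig_def S_def mult_le_def)
  also have "\<dots> = Min S" using \<open>finite S\<close> \<open>c \<in> S\<close> by (intro cInf_eq_Min) auto
  finally show "0 < eta2 M" "eta2 M \<le> c"
    using pos[OF Min_in] Min_le \<open>finite S\<close> \<open>c \<in> S\<close> by fastforce+
qed

section \<open>Laplacians of weight-balanced digraphs\<close>

lemma laplacian_nth: "laplacian a $ i $ j = (if i = j then (\<Sum>k\<in>UNIV. a i k) else 0) - a i j"
  by (simp add: laplacian_def)

lemma sum_laplacian_row: "(\<Sum>j\<in>UNIV. laplacian a $ i $ j) = 0"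
  by (simp add: laplacian_nth sum_subtractf)

lemma sum_laplacian_column:
  assumes "weight_balanced a"
  shows "(\<Sum>i\<in>UNIV. laplacian a $ i $ j) = 0"
  using assms by (simp add: laplacian_nth sum_subtractf weight_balanced_def)

lemma laplacian_quadratic_form:
  assumes "weight_balanced a"
  shows "u \<bullet> (laplacian a *v u) = (\<Sum>i\<in>UNIV. \<Sum>j\<in>UNIV. a i j * (u $ i - u $ j)\<^sup>2) / 2"
proof -
  have "(\<Sum>j\<in>UNIV. laplacian a $ i $ j * u $ i * u $ j)
      = (\<Sum>j\<in>UNIV. a i j * (u $ i)\<^sup>2) - (\<Sum>j\<in>UNIV. a i j * u $ i * u $ j)" for i
  proof -
    have "(\<Sum>j\<in>UNIV. laplacian a $ i $ j * u $ i * u $ j)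
        = (\<Sum>j\<in>UNIV. (if i = j then (\<Sum>k\<in>UNIV. a i k) * u $ i * u $ j else 0) - a i j * u $ i * u $ j)"
      by (intro sum.cong) (auto simp: laplacian_nth algebra_simps)
    then show ?thesis by (simp add: sum_subtractf power2_eq_square mult.assoc sum_distrib_right)
  qed
  moreover have "u \<bullet> (laplacian a *v u) = (\<Sum>i\<in>UNIV. \<Sum>j\<in>UNIV. laplacian a $ i $ j * u $ i * u $ j)"
    by (simp add: inner_vec_def matrix_vector_mult_def sum_distrib_left ac_simps)
  ultimately have row: "u \<bullet> (laplacian a *v u)
      = (\<Sum>i\<in>UNIV. \<Sum>j\<in>UNIV. a i j * (u $ i)\<^sup>2) - (\<Sum>i\<in>UNIV. \<Sum>j\<in>UNIV. a i j * u $ i * u $ j)"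
    by (simp add: sum_subtractf)
  have "(\<Sum>i\<in>UNIV. \<Sum>j\<in>UNIV. a i j * (u $ j)\<^sup>2) = (\<Sum>j\<in>UNIV. \<Sum>i\<in>UNIV. a j i * (u $ j)\<^sup>2)"
    using assms by (subst sum.swap) (simp add: weight_balanced_def flip: sum_distrib_right)
  then show ?thesis
    by (simp add: row power2_diff algebra_simps sum.distrib sum_subtractf sum_distrib_left)
qed

lemma laplacian_quadratic_form_nonneg:
  assumes "weight_balanced a" and "\<And>i j. a i j \<ge> 0"
  shows "0 \<le> u \<bullet> (laplacian a *v u)"
  unfolding laplacian_quadratic_form[OF assms(1)] using assms(2)
  by (intro divide_nonneg_pos sum_nonneg mult_nonneg_nonneg) auto

lemma laplacian_quadratic_form_eq_0_imp_consensus: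
  assumes wb: "weight_balanced a" and nonneg: "\<And>i j. a i j \<ge> 0" and sc: "strongly_connected a"
    and zero: "u \<bullet> (laplacian a *v u) = 0"
  shows "u $ i = u $ j"
proof -
  have "(\<Sum>i\<in>UNIV. \<Sum>j\<in>UNIV. a i j * (u $ i - u $ j)\<^sup>2) = 0"
    using zero by (simp add: laplacian_quadratic_form[OF wb])
  then have edge: "a k l * (u $ k - u $ l)\<^sup>2 = 0" for k l
    using nonneg by (simp add: sum_nonneg sum_nonneg_eq_0_iff)
  have "(j, i) \<in> {(v, w). a w v > 0}\<^sup>*" using sc unfolding strongly_connected_def by blast
  then show ?thesis
  proof (induction rule: rtrancl_induct)
    case (step k l)
    then show ?case using edge[of l k] by simp
  qed simp
qed

lemma laplacian_mult_one: "laplacian a *v 1 = 0"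
  by (simp add: vec_eq_iff matrix_vector_mult_def sum_laplacian_row)

lemma sym_part_laplacian_mult_one:
  assumes "weight_balanced a"
  shows "sym_part (laplacian a) *v 1 = 0"
proof -
  have "transpose (laplacian a) *v 1 = 0"
    using sum_laplacian_column[OF assms] by (simp add: vec_eq_iff matrix_vector_mult_def transpose_def)
  then show ?thesis
    by (simp add: sym_part_def laplacian_mult_one matrix_vector_mult_add_rdistrib
        flip: scaleR_matrix_vector_assoc)
qed

lemma sum_eq_inner_one: "(\<Sum>i\<in>UNIV. u $ i) = u \<bullet> (1 :: real^'n)"
  by (simp add: inner_vec_def)

lemma laplacian_quadratic_form_eq_0_imp_const:
  assumes wb: "weight_balanced a" and nonneg: "\<And>i j. a i j \<ge> 0" and sc: "strongly_connected a"
    and zero: "u \<bullet> (laplacian a *v u) = 0"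
  shows "\<exists>s. u = s *\<^sub>R 1"
proof
  show "u = u $ undefined *\<^sub>R 1"
  proof (rule vec_eq_iff[THEN iffD2], rule allI)
    fix k
    show "u $ k = (u $ undefined *\<^sub>R 1) $ k"
      using laplacian_quadratic_form_eq_0_imp_consensus[OF wb nonneg sc zero, of k undefined] by simp
  qed
qed

lemma sym_part_laplacian_eigenvalue_nonneg:
  assumes wb: "weight_balanced a" and nonneg: "\<And>i j. a i j \<ge> 0"
    and d: "is_eig (sym_part (laplacian a)) d"
  shows "0 \<le> d"
proof -
  obtain w where w: "w \<noteq> 0" "sym_part (laplacian a) *v w = d *\<^sub>R w" using d by (auto simp: is_eig_def)
  have "0 \<le> w \<bullet> (sym_part (laplacian a) *v w)"
    using laplacian_quadratic_form_nonneg[OF wb nonneg, of w] by (simp add: inner_sym_part)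
  then have "0 \<le> d * (w \<bullet> w)" using w(2) by simp
  moreover have "0 < w \<bullet> w" using w(1) by simp
  ultimately show ?thesis by (auto simp: zero_le_mult_iff)
qed

lemma eig_mult_sym_part_laplacian_0:
  assumes wb: "weight_balanced a" and nonneg: "\<And>i j. a i j \<ge> 0" and sc: "strongly_connected a"
  shows "eig_mult (sym_part (laplacian a)) 0 \<le> 1"
proof -
  have "{w. sym_part (laplacian a) *v w = 0 *\<^sub>R w} \<subseteq> span {1}"
  proof
    fix w assume "w \<in> {w. sym_part (laplacian a) *v w = 0 *\<^sub>R w}"
    then have "w \<bullet> (laplacian a *v w) = 0" by (simp flip: inner_sym_part)
    then obtain s where "w = s *\<^sub>R 1" using laplacian_quadratic_form_eq_0_imp_const[OF wb nonneg sc] by blast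
    then show "w \<in> span {1}" by (simp add: span_base span_scale)
  qed
  then show ?thesis unfolding eig_mult_def using dim_le_card[of _ "{1}"] by simp
qed

lemma exists_nonzero_orthogonal_one:
  assumes "CARD('n::finite) \<ge> 2"
  obtains u :: "real^'n" where "u \<noteq> 0" "u \<bullet> 1 = 0"
proof -
  have "\<exists>i j :: 'n. i \<noteq> j"
  proof (rule ccontr)
    assume "\<not> ?thesis"
    then have "CARD('n) \<le> Suc 0" by (subst card_le_Suc0_iff_eq) auto
    with assms show False by simp
  qed
  then obtain i j :: 'n where "i \<noteq> j" by blast
  then have "(axis i 1 - axis j 1) $ i = (1 :: real)" "(axis i 1 - axis j 1) \<bullet> (1 :: real^'n) = 0"
    by (simp_all add: axis_def inner_vec_def sum_subtractf)
  moreover from this(1) have "axis i 1 - axis j 1 \<noteq> (0 :: real^'n)" by (metis one_neq_zero zero_index)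
  ultimately show ?thesis using that by blast
qed

lemma eta2_sym_part_laplacian:
  fixes a :: "'n::finite \<Rightarrow> 'n \<Rightarrow> real"
  assumes wb: "weight_balanced a" and nonneg: "\<And>i j. a i j \<ge> 0" and sc: "strongly_connected a"
    and two: "CARD('n) \<ge> 2"
  shows "0 < eta2 (sym_part (laplacian a))"
    and "\<And>u. (\<Sum>i\<in>UNIV. u $ i) = 0 \<Longrightarrow> eta2 (sym_part (laplacian a)) * (norm u)\<^sup>2 \<le> u \<bullet> (laplacian a *v u)"
proof -
  define Lh where "Lh = sym_part (laplacian a)"
  have sym: "transpose Lh = Lh" by (simp add: Lh_def transpose_sym_part)
  obtain u0 :: "real^'n" where "u0 \<noteq> 0" "u0 \<bullet> 1 = 0" using exists_nonzero_orthogonal_one[OF two] .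
  then obtain c v where v: "v \<noteq> 0" "v \<bullet> 1 = 0" "Lh *v v = c *\<^sub>R v"
    and bound: "\<And>u. u \<bullet> 1 = 0 \<Longrightarrow> c * (norm u)\<^sup>2 \<le> u \<bullet> (Lh *v u)"
    using rayleigh_minimum_on_orthogonal_complement[OF sym sym_part_laplacian_mult_one[OF wb, folded Lh_def]]
    by blast
  have "is_eig Lh c" using v by (auto simp: is_eig_def)
  then have "0 \<le> c" unfolding Lh_def by (rule sym_part_laplacian_eigenvalue_nonneg[OF wb nonneg])
  moreover have "c \<noteq> 0"
  proof
    assume "c = 0"
    then have "v \<bullet> (laplacian a *v v) = 0" using v(3) by (simp add: Lh_def flip: inner_sym_part)
    then obtain s where s: "v = s *\<^sub>R 1" using laplacian_quadratic_form_eq_0_imp_const[OF wb nonneg sc] by blast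
    then have "s * real CARD('n) = 0" using v(2) by (simp add: inner_vec_def)
    then show False using s v(1) by simp
  qed
  moreover have "is_eig Lh 0" unfolding is_eig_def
    using sym_part_laplacian_mult_one[OF wb, folded Lh_def] by (intro exI[of _ 1]) simp
  ultimately have "0 < eta2 Lh" "eta2 Lh \<le> c"
    using eta2_pos_le_eigenvalue[OF sym _ _ _ \<open>is_eig Lh c\<close>] sym_part_laplacian_eigenvalue_nonneg[OF wb nonneg]
      eig_mult_sym_part_laplacian_0[OF wb nonneg sc] unfolding Lh_def by auto
  then show "0 < eta2 (sym_part (laplacian a))" by (simp add: Lh_def)
  fix u :: "real^'n" assume "(\<Sum>i\<in>UNIV. u $ i) = 0"
  then have "c * (norm u)\<^sup>2 \<le> u \<bullet> (laplacian a *v u)" using bound by (simp add: Lh_def inner_sym_part sum_eq_inner_one)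
  then show "eta2 (sym_part (laplacian a)) * (norm u)\<^sup>2 \<le> u \<bullet> (laplacian a *v u)"
    using mult_right_mono[OF \<open>eta2 Lh \<le> c\<close> zero_le_power2[of "norm u"]] by (simp add: Lh_def)
qed

section \<open>Stacked vectors and the disagreement projection\<close>

lemma inner_nested_vec: "u \<bullet> w = (\<Sum>i\<in>UNIV. u $ i \<bullet> w $ i)" for u w :: "real^'p^'n::finite"
  by (rule inner_vec_def)

lemma power2_norm_nested_vec: "(norm v)\<^sup>2 = (\<Sum>i\<in>UNIV. (norm (v $ i))\<^sup>2)" for v :: "real^'p^'n::finite"
  by (simp add: power2_norm_eq_inner inner_nested_vec)

lemma power2_norm_columns: "(norm v)\<^sup>2 = (\<Sum>k\<in>UNIV. (norm (\<chi> i. v $ i $ k))\<^sup>2)"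
  for v :: "real^'p^'n::finite"
  by (simp add: power2_norm_eq_inner inner_vec_def) (rule sum.swap)

definition deviation :: "real^'p^'n::finite \<Rightarrow> real^'p^'n" where
  "deviation v = v - (\<chi> i. (1 / real CARD('n)) *\<^sub>R (\<Sum>j\<in>UNIV. v $ j))"

lemma sum_deviation: "(\<Sum>i\<in>UNIV. deviation v $ i) = 0" for v :: "real^'p^'n::finite"
proof -
  have "(\<Sum>i\<in>UNIV. deviation v $ i)
      = (\<Sum>j\<in>UNIV. v $ j) - (\<Sum>i\<in>(UNIV::'n set). (1 / real CARD('n)) *\<^sub>R (\<Sum>j\<in>UNIV. v $ j))"
    by (simp add: deviation_def sum_subtractf)
  also have "(\<Sum>i\<in>(UNIV::'n set). (1 / real CARD('n)) *\<^sub>R (\<Sum>j\<in>UNIV. v $ j))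
      = real CARD('n) *\<^sub>R ((1 / real CARD('n)) *\<^sub>R (\<Sum>j\<in>UNIV. v $ j))"
    by (rule sum_constant_scaleR)
  finally show ?thesis by simp
qed

lemma deviation_eq_self: "(\<Sum>i\<in>UNIV. v $ i) = 0 \<Longrightarrow> deviation v = v" for v :: "real^'p^'n::finite"
  by (simp add: deviation_def vec_eq_iff)

lemma linear_deviation: "linear deviation"
  by (rule linearI)
    (simp_all add: deviation_def vec_eq_iff sum.distrib scaleR_sum_right algebra_simps)

lemma inner_deviation:
  "deviation v \<bullet> w = v \<bullet> w - (1 / real CARD('n)) * ((\<Sum>j\<in>UNIV. v $ j) \<bullet> (\<Sum>j\<in>UNIV. w $ j))"
  for v w :: "real^'p^'n::finite"
  by (simp add: inner_nested_vec deviation_def inner_diff_left sum_subtractf inner_sum_right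
      sum_distrib_left)

interpretation deviation: orthogonal_projector "deviation :: real^'p^'n::finite \<Rightarrow> _"
proof (rule orthogonal_projector.intro)
  show "bounded_linear (deviation :: real^'p^'n \<Rightarrow> _)"
    using linear_deviation linear_conv_bounded_linear by blast
  show "deviation v \<bullet> w = v \<bullet> deviation w" for v w :: "real^'p^'n"
    by (simp only: inner_commute[of v "deviation w"] inner_deviation) (simp add: inner_commute)
  show "deviation (deviation v) = deviation v" for v :: "real^'p^'n"
    by (rule deviation_eq_self[OF sum_deviation])
qed

lemma deviation_eq_0_if_card_lt_2:
  assumes "CARD('n::finite) < 2"
  shows "deviation (v :: real^'p^'n) = 0"
proof -
  have "0 < CARD('n)" by simp
  then have "CARD('n) = 1" using assms by linarith
  then obtain i :: 'n where i: "UNIV = {i}" using card_1_singletonE by blast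
  have sum: "(\<Sum>j\<in>UNIV. v $ j) = v $ i" by (subst i) simp
  show ?thesis
  proof (rule vec_eq_iff[THEN iffD2], rule allI)
    fix k :: 'n
    have "k = i" using i by (metis UNIV_I singletonD)
    then show "deviation v $ k = 0 $ k" using \<open>CARD('n) = 1\<close> sum by (simp add: deviation_def)
  qed
qed

lemma lap_apply_nth: "lap_apply M v $ i = (\<Sum>j\<in>UNIV. M $ i $ j *\<^sub>R v $ j)"
  by (simp add: lap_apply_def)

lemma linear_lap_apply: "linear (lap_apply M :: real^'p^'n::finite \<Rightarrow> _)"
  by (rule linearI)
    (simp_all add: vec_eq_iff lap_apply_nth scaleR_add_right sum.distrib scaleR_sum_right ac_simps)

lemma sum_lap_apply_laplacian:
  assumes "weight_balanced a"
  shows "(\<Sum>i\<in>UNIV. lap_apply (laplacian a) v $ i) = 0"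
proof -
  have "(\<Sum>i\<in>UNIV. lap_apply (laplacian a) v $ i) = (\<Sum>j\<in>UNIV. (\<Sum>i\<in>UNIV. laplacian a $ i $ j) *\<^sub>R v $ j)"
    by (simp add: lap_apply_nth scaleR_sum_left) (rule sum.swap)
  then show ?thesis by (simp add: sum_laplacian_column[OF assms])
qed

lemma lap_apply_laplacian_const: "lap_apply (laplacian a) (\<chi> i. c) = 0"
  by (simp add: vec_eq_iff lap_apply_nth sum_laplacian_row flip: scaleR_sum_left)

lemma lap_apply_laplacian_deviation: "lap_apply (laplacian a) (deviation v) = lap_apply (laplacian a) v"
  using linear_diff[OF linear_lap_apply, of "laplacian a" v]
  by (simp add: deviation_def lap_apply_laplacian_const)

lemma inner_lap_apply_columns:
  "v \<bullet> lap_apply M v = (\<Sum>k\<in>UNIV. (\<chi> i. v $ i $ k) \<bullet> (M *v (\<chi> i. v $ i $ k)))"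
  for v :: "real^'p^'n::finite"
proof -
  have "v \<bullet> lap_apply M v = (\<Sum>i\<in>UNIV. \<Sum>k\<in>UNIV. \<Sum>j\<in>UNIV. v $ i $ k * (M $ i $ j * v $ j $ k))"
    by (simp add: inner_nested_vec lap_apply_def inner_sum_right inner_vec_def sum_distrib_left ac_simps)
  also have "\<dots> = (\<Sum>k\<in>UNIV. \<Sum>i\<in>UNIV. \<Sum>j\<in>UNIV. v $ i $ k * (M $ i $ j * v $ j $ k))"
    by (rule sum.swap)
  also have "\<dots> = (\<Sum>k\<in>UNIV. (\<chi> i. v $ i $ k) \<bullet> (M *v (\<chi> i. v $ i $ k)))"
    by (simp add: inner_vec_def matrix_vector_mult_def sum_distrib_left)
  finally show ?thesis .
qed

lemma inner_lap_apply_laplacian_ge: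
  fixes v :: "real^'p^'n::finite"
  assumes wb: "weight_balanced a" and nonneg: "\<And>i j. a i j \<ge> 0" and sc: "strongly_connected a"
    and two: "CARD('n) \<ge> 2"
  shows "eta2 (sym_part (laplacian a)) * (norm (deviation v))\<^sup>2 \<le> v \<bullet> lap_apply (laplacian a) v"
proof -
  define w where "w = deviation v"
  have "deviation (lap_apply (laplacian a) w) = lap_apply (laplacian a) w"
    by (rule deviation_eq_self[OF sum_lap_apply_laplacian[OF wb]])
  then have "v \<bullet> lap_apply (laplacian a) v = w \<bullet> lap_apply (laplacian a) w"
    by (metis w_def lap_apply_laplacian_deviation deviation.self_adjoint)
  also have "\<dots> = (\<Sum>k\<in>UNIV. (\<chi> i. w $ i $ k) \<bullet> (laplacian a *v (\<chi> i. w $ i $ k)))"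
    by (rule inner_lap_apply_columns)
  also have "\<dots> \<ge> (\<Sum>k\<in>UNIV. eta2 (sym_part (laplacian a)) * (norm (\<chi> i. w $ i $ k))\<^sup>2)"
  proof (intro sum_mono eta2_sym_part_laplacian(2)[OF wb nonneg sc two])
    fix k
    have "(\<Sum>i\<in>UNIV. w $ i) $ k = 0" by (simp add: w_def sum_deviation)
    then show "(\<Sum>i\<in>UNIV. (\<chi> i. w $ i $ k) $ i) = 0" by simp
  qed
  finally show ?thesis by (simp add: w_def power2_norm_columns[of "deviation v"] sum_distrib_left)
qed

lemma scaled_lap_apply_laplacian_bounds:
  fixes a :: "'n::finite \<Rightarrow> 'n \<Rightarrow> real"
  assumes wb: "weight_balanced a" and nonneg: "\<And>i j. a i j \<ge> 0" and sc: "strongly_connected a"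
    and \<rho>: "0 < \<rho>" and gain: "CARD('n) \<ge> 2 \<Longrightarrow> \<rho> \<le> \<beta> * eta2 (sym_part (laplacian a))"
  obtains K where "0 \<le> K"
    "\<And>v :: real^'p^'n. \<rho> * (norm (deviation v))\<^sup>2 \<le> v \<bullet> (\<beta> *\<^sub>R lap_apply (laplacian a) v)"
    "\<And>v :: real^'p^'n. norm (\<beta> *\<^sub>R lap_apply (laplacian a) v) \<le> K * norm (deviation v)"
proof -
  have "bounded_linear (lap_apply (laplacian a) :: real^'p^'n \<Rightarrow> _)"
    using linear_lap_apply linear_conv_bounded_linear by blast
  from bounded_linear.pos_bounded[OF bounded_linear_compose[OF bounded_linear_scaleR_right this, of \<beta>]]
  obtain K where K: "K > 0" "\<And>v :: real^'p^'n. norm (\<beta> *\<^sub>R lap_apply (laplacian a) v) \<le> norm v * K"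
    by blast
  show ?thesis
  proof (rule that[of K])
    show "0 \<le> K" using K by simp
    fix v :: "real^'p^'n"
    have "norm (\<beta> *\<^sub>R lap_apply (laplacian a) v) = norm (\<beta> *\<^sub>R lap_apply (laplacian a) (deviation v))"
      by (simp only: lap_apply_laplacian_deviation)
    also have "\<dots> \<le> norm (deviation v) * K" by (rule K(2))
    finally show "norm (\<beta> *\<^sub>R lap_apply (laplacian a) v) \<le> K * norm (deviation v)"
      by (simp only: mult.commute)
    show "\<rho> * (norm (deviation v))\<^sup>2 \<le> v \<bullet> (\<beta> *\<^sub>R lap_apply (laplacian a) v)"
    proof (cases "CARD('n) \<ge> 2")
      case True
      have \<eta>: "0 < eta2 (sym_part (laplacian a))" by (rule eta2_sym_part_laplacian(1)[OF wb nonneg sc True])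
      have "0 < \<beta> * eta2 (sym_part (laplacian a))" using gain[OF True] \<rho> by linarith
      then have "0 \<le> \<beta>" using zero_less_mult_pos2[OF _ \<eta>] less_imp_le by blast
      have "\<rho> * (norm (deviation v))\<^sup>2 \<le> \<beta> * eta2 (sym_part (laplacian a)) * (norm (deviation v))\<^sup>2"
        by (rule mult_right_mono[OF gain[OF True] zero_le_power2])
      also have "\<dots> = \<beta> * (eta2 (sym_part (laplacian a)) * (norm (deviation v))\<^sup>2)"
        by (rule mult.assoc)
      also have "\<dots> \<le> \<beta> * (v \<bullet> lap_apply (laplacian a) v)"
        by (rule mult_left_mono[OF inner_lap_apply_laplacian_ge[OF wb nonneg sc True] \<open>0 \<le> \<beta>\<close>])
      finally show ?thesis by simp
    next
      case False
      \<comment> \<open>a single agent: the Laplacian term vanishes and nothing is required of \<beta>\<close>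
      then have "deviation v = 0" by (intro deviation_eq_0_if_card_lt_2) simp
      moreover have "lap_apply (laplacian a) v = lap_apply (laplacian a) (deviation v)"
        by (rule lap_apply_laplacian_deviation[symmetric])
      ultimately show ?thesis by (simp add: linear_0[OF linear_lap_apply])
    qed
  qed
qed

lemma sum_nth_const_if_derivative_sum_0:
  fixes z :: "real \<Rightarrow> 'a::real_normed_vector^'n::finite"
  assumes deriv: "\<And>t. t \<ge> 0 \<Longrightarrow> (z has_vector_derivative z' t) (at t within {0..})"
    and sum0: "\<And>t. t \<ge> 0 \<Longrightarrow> (\<Sum>i\<in>UNIV. z' t $ i) = 0" and t: "t \<ge> 0"
  shows "(\<Sum>i\<in>UNIV. z t $ i) = (\<Sum>i\<in>UNIV. z 0 $ i)"
proof -
  have "((\<lambda>t. \<Sum>i\<in>UNIV. z t $ i) has_derivative (\<lambda>h. 0)) (at s within {0..})" if "s \<in> {0..}" for s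
  proof -
    have "((\<lambda>t. \<Sum>i\<in>UNIV. z t $ i) has_vector_derivative (\<Sum>i\<in>UNIV. z' s $ i)) (at s within {0..})"
      using that by (intro has_vector_derivative_sum
          bounded_linear.has_vector_derivative[OF bounded_linear_vec_nth] deriv) auto
    then show ?thesis using sum0 that by (simp add: has_vector_derivative_def)
  qed
  then obtain c where "\<forall>s\<in>{0::real..}. (\<Sum>i\<in>UNIV. z s $ i) = c"
    using has_derivative_zero_constant[OF convex_real_interval(1)] by blast
  then show ?thesis using t by simp
qed

lemma stacked_gradient_strongly_monotone:
  fixes f :: "'n::finite \<Rightarrow> real^'p \<Rightarrow> real" and u v :: "real^'p^'n"
  assumes grad: "\<And>i u. (f i has_derivative (\<lambda>h. gf i u \<bullet> h)) (at u)"
    and convex: "\<And>i. strongly_convex_on (mu_i i) UNIV (f i)" and \<mu>: "\<And>i. \<mu> \<le> mu_i i"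
  shows "\<mu> * (norm (u - v))\<^sup>2 \<le> (u - v) \<bullet> (\<chi> i. gf i (u $ i) - gf i (v $ i))"
proof -
  have "\<mu> * (norm (u $ i - v $ i))\<^sup>2 \<le> (u $ i - v $ i) \<bullet> (gf i (u $ i) - gf i (v $ i))" for i
    using mult_right_mono[OF \<mu>[of i] zero_le_power2[of "norm (u $ i - v $ i)"]]
      strongly_convex_on_gradient_monotone[OF grad convex, of i "u $ i" "v $ i"]
    by (simp add: inner_commute)
  then have "(\<Sum>i\<in>UNIV. \<mu> * (norm (u $ i - v $ i))\<^sup>2)
      \<le> (\<Sum>i\<in>UNIV. (u $ i - v $ i) \<bullet> (gf i (u $ i) - gf i (v $ i)))"
    by (rule sum_mono)
  then show ?thesis
    by (simp add: power2_norm_nested_vec inner_nested_vec sum_distrib_left)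
qed

lemma stacked_gradient_lipschitz:
  fixes gf :: "'n::finite \<Rightarrow> real^'p \<Rightarrow> real^'p" and u v :: "real^'p^'n"
  assumes lip: "\<And>i u v. norm (gf i u - gf i v) \<le> l_i i * norm (u - v)"
    and l: "\<And>i. l_i i \<le> l" "0 \<le> l"
  shows "norm (\<chi> i. gf i (u $ i) - gf i (v $ i)) \<le> l * norm (u - v)"
proof -
  have "norm (gf i (u $ i) - gf i (v $ i)) \<le> l * norm (u $ i - v $ i)" for i
    using lip[of i "u $ i" "v $ i"] mult_right_mono[OF l(1)[of i] norm_ge_zero[of "u $ i - v $ i"]]
    by linarith
  then have "(norm (gf i (u $ i) - gf i (v $ i)))\<^sup>2 \<le> (l * norm (u $ i - v $ i))\<^sup>2" for i
    by (intro power_mono) simp_all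
  then have "(\<Sum>i\<in>UNIV. (norm (gf i (u $ i) - gf i (v $ i)))\<^sup>2) \<le> (\<Sum>i\<in>UNIV. (l * norm (u $ i - v $ i))\<^sup>2)"
    by (rule sum_mono)
  then have "(norm (\<chi> i. gf i (u $ i) - gf i (v $ i)))\<^sup>2 \<le> (l * norm (u - v))\<^sup>2"
    by (simp add: power2_norm_nested_vec power_mult_distrib sum_distrib_left)
  then show ?thesis by (rule power2_le_imp_le) (use l(2) in simp)
qed

section \<open>Exponential convergence of IDEA\<close>

lemma four_alpha_mu_gt_1:
  fixes \<phi> \<alpha> \<mu> l :: real
  assumes \<phi>: "\<phi> > 0" and \<mu>: "\<mu> > 0"
    and alpha: "\<alpha> \<ge> max (1/2) (((\<phi>\<^sup>2 + 3*\<phi> + 3) + l\<^sup>2 + 3/2 - \<mu>) / ((\<phi> + 1) * \<mu>))"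
  shows "0 < \<alpha>" and "1 < 4 * \<alpha> * \<mu>"
proof -
  show "0 < \<alpha>" using alpha by simp
  show "1 < 4 * \<alpha> * \<mu>"
  proof (rule ccontr)
    assume "\<not> 1 < 4 * \<alpha> * \<mu>"
    then have small: "\<alpha> * \<mu> \<le> 1/4" by simp
    \<comment> \<open>\<alpha> \<ge> 1/2 then forces \<mu> \<le> 1/2, which makes the numerator of the bound on \<alpha> large\<close>
    have "1/2 \<le> \<alpha>" using alpha by simp
    then have "1/2 * \<mu> \<le> \<alpha> * \<mu>" using \<mu> by (intro mult_right_mono) simp_all
    then have "\<mu> \<le> 1/2" using small by linarith
    have "(\<phi>\<^sup>2 + 3*\<phi> + 3) + l\<^sup>2 + 3/2 - \<mu> \<le> \<alpha> * ((\<phi> + 1) * \<mu>)"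
      using alpha \<phi> \<mu> by (simp add: pos_divide_le_eq)
    also have "\<dots> = (\<alpha> * \<mu>) * (\<phi> + 1)" by simp
    also have "\<dots> \<le> 1/4 * (\<phi> + 1)" using small \<phi> by (intro mult_right_mono) simp_all
    also have "\<dots> = \<phi> / 4 + 1 / 4" by simp
    finally show False using \<open>\<mu> \<le> 1/2\<close> \<phi> zero_le_power2[of l] zero_le_power2[of \<phi>] by linarith
  qed
qed

lemma four_alpha_le_beta_eta:
  fixes \<phi> \<alpha> \<beta> \<eta> :: real
  assumes \<phi>: "\<phi> > 0" and \<alpha>: "\<alpha> > 0" and \<eta>: "\<eta> > 0"
    and beta: "\<beta> \<ge> (2 * (\<phi> + 1)\<^sup>2 * \<alpha>\<^sup>2 + 1) / (2 * \<phi> * \<alpha> * \<eta>)"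
  shows "4 * \<alpha> \<le> \<beta> * \<eta>"
proof -
  have "2 * (\<phi> + 1)\<^sup>2 * \<alpha>\<^sup>2 - 8 * \<phi> * \<alpha>\<^sup>2 = 2 * \<alpha>\<^sup>2 * (\<phi> - 1)\<^sup>2"
    by (simp add: power2_eq_square algebra_simps)
  moreover have "0 \<le> 2 * \<alpha>\<^sup>2 * (\<phi> - 1)\<^sup>2" by simp
  ultimately have "8 * \<phi> * \<alpha>\<^sup>2 \<le> 2 * (\<phi> + 1)\<^sup>2 * \<alpha>\<^sup>2 + 1" by linarith
  also have "\<dots> \<le> \<beta> * (2 * \<phi> * \<alpha> * \<eta>)" using beta \<phi> \<alpha> \<eta> by (simp add: pos_divide_le_eq)
  finally have "(4 * \<alpha>) * (2 * \<phi> * \<alpha>) \<le> (\<beta> * \<eta>) * (2 * \<phi> * \<alpha>)"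
    by (simp add: power2_eq_square ac_simps)
  then show ?thesis using \<phi> \<alpha> by simp
qed

lemma idea_error_dynamics:
  fixes x lam z :: "real \<Rightarrow> real^'p^'n::finite" and xs bb :: "real^'p^'n"
  assumes opt_grad: "\<And>i. gf i (xs $ i) = \<nu>"
    and dx: "(x has_vector_derivative
        (\<chi> i. - \<alpha> *\<^sub>R (gf i (x t $ i) + lam t $ i) - (x t $ i - bb $ i - z t $ i))) (at t within S)"
    and dlam: "(lam has_vector_derivative
        (x t - bb - z t - \<beta> *\<^sub>R lap_apply (laplacian a) (lam t))) (at t within S)"
    and dz: "(z has_vector_derivative ((\<alpha> * \<beta>) *\<^sub>R lap_apply (laplacian a) (lam t))) (at t within S)"
  defines "ls \<equiv> \<chi> i. - \<nu>"
  shows "((\<lambda>t. x t - xs) has_vector_derivative - \<alpha> *\<^sub>R (\<chi> i. gf i (x t $ i) - gf i (xs $ i))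
      - \<alpha> *\<^sub>R (lam t - ls) - ((x t - xs) - (z t - (xs - bb)))) (at t within S)"
    and "((\<lambda>t. lam t - ls) has_vector_derivative
      ((x t - xs) - (z t - (xs - bb))) - \<beta> *\<^sub>R lap_apply (laplacian a) (lam t - ls)) (at t within S)"
    and "((\<lambda>t. z t - (xs - bb)) has_vector_derivative
      \<alpha> *\<^sub>R (\<beta> *\<^sub>R lap_apply (laplacian a) (lam t - ls))) (at t within S)"
proof -
  have lap: "lap_apply (laplacian a) (lam t - ls) = lap_apply (laplacian a) (lam t)"
    using linear_diff[OF linear_lap_apply, of "laplacian a" "lam t" ls]
    by (simp add: ls_def lap_apply_laplacian_const)
  show "((\<lambda>t. x t - xs) has_vector_derivative - \<alpha> *\<^sub>R (\<chi> i. gf i (x t $ i) - gf i (xs $ i))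
      - \<alpha> *\<^sub>R (lam t - ls) - ((x t - xs) - (z t - (xs - bb)))) (at t within S)"
  proof -
    have "(\<chi> i. - \<alpha> *\<^sub>R (gf i (x t $ i) + lam t $ i) - (x t $ i - bb $ i - z t $ i))
        = - \<alpha> *\<^sub>R (\<chi> i. gf i (x t $ i) - gf i (xs $ i)) - \<alpha> *\<^sub>R (lam t - ls)
          - ((x t - xs) - (z t - (xs - bb)))"
      by (simp add: vec_eq_iff opt_grad ls_def algebra_simps)
    then show ?thesis using has_vector_derivative_diff[OF dx has_vector_derivative_const[of xs]] by simp
  qed
  show "((\<lambda>t. lam t - ls) has_vector_derivative
      ((x t - xs) - (z t - (xs - bb))) - \<beta> *\<^sub>R lap_apply (laplacian a) (lam t - ls)) (at t within S)"
    using has_vector_derivative_diff[OF dlam has_vector_derivative_const[of ls]]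
    by (simp add: lap algebra_simps)
  show "((\<lambda>t. z t - (xs - bb)) has_vector_derivative
      \<alpha> *\<^sub>R (\<beta> *\<^sub>R lap_apply (laplacian a) (lam t - ls))) (at t within S)"
    using has_vector_derivative_diff[OF dz has_vector_derivative_const[of "xs - bb"]] by (simp add: lap)
qed

lemma idea_exponential_convergence:
  fixes f :: "'n::finite \<Rightarrow> real^'p \<Rightarrow> real" and x lam z :: "real \<Rightarrow> real^'p^'n"
  assumes grad: "\<And>i u. (f i has_derivative (\<lambda>h. gf i u \<bullet> h)) (at u)"
    and convex: "\<And>i. strongly_convex_on (mu_i i) UNIV (f i)" and \<mu>: "0 < \<mu>" "\<And>i. \<mu> \<le> mu_i i"
    and lip: "\<And>i u v. norm (gf i u - gf i v) \<le> l_i i * norm (u - v)" and l: "\<And>i. l_i i \<le> l" "0 \<le> l"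
    and a_nonneg: "\<And>i j. a i j \<ge> 0" and sc: "strongly_connected a" and wb: "weight_balanced a"
    and \<alpha>: "0 < \<alpha>" "1 < 4 * \<alpha> * \<mu>"
    and gain: "CARD('n) \<ge> 2 \<Longrightarrow> 4 * \<alpha> \<le> \<beta> * eta2 (sym_part (laplacian a))"
    and kkt: "\<And>i. gf i (xs $ i) = \<nu>" "(\<Sum>i\<in>UNIV. xs $ i) = (\<Sum>i\<in>UNIV. bb $ i)"
    and dx: "\<And>t. t \<ge> 0 \<Longrightarrow> (x has_vector_derivative
        (\<chi> i. - \<alpha> *\<^sub>R (gf i (x t $ i) + lam t $ i) - (x t $ i - bb $ i - z t $ i))) (at t within {0..})"
    and dlam: "\<And>t. t \<ge> 0 \<Longrightarrow> (lam has_vector_derivative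
        (x t - bb - z t - \<beta> *\<^sub>R lap_apply (laplacian a) (lam t))) (at t within {0..})"
    and dz: "\<And>t. t \<ge> 0 \<Longrightarrow> (z has_vector_derivative
        ((\<alpha> * \<beta>) *\<^sub>R lap_apply (laplacian a) (lam t))) (at t within {0..})"
    and z0: "(\<Sum>i\<in>UNIV. z 0 $ i) = 0"
  obtains C c where "C > 0" "c > 0"
    "\<And>t. t \<ge> 0 \<Longrightarrow> norm ((x t, lam t, z t) - (xs, \<chi> i. - \<nu>, xs - bb)) \<le> C * exp (- c * t)"
proof -
  define ls :: "real^'p^'n" where "ls = (\<chi> i. - \<nu>)"
  have "0 < 4 * \<alpha>" using \<alpha>(1) by simp
  then obtain K where K: "0 \<le> K"
    and Y: "\<And>v :: real^'p^'n. 4 * \<alpha> * (norm (deviation v))\<^sup>2 \<le> v \<bullet> (\<beta> *\<^sub>R lap_apply (laplacian a) v)"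
      "\<And>v :: real^'p^'n. norm (\<beta> *\<^sub>R lap_apply (laplacian a) v) \<le> K * norm (deviation v)"
    using scaled_lap_apply_laplacian_bounds[OF wb a_nonneg sc _ gain] by metis
  have "1 / (2 * \<mu>) < 2 * \<alpha>" using \<alpha>(2) \<mu>(1) by (simp add: divide_less_eq algebra_simps)
  then have \<rho>: "2 * \<alpha> + 1 / (2 * \<mu>) < 4 * \<alpha>" by linarith
  have "(\<Sum>i\<in>UNIV. ((\<alpha> * \<beta>) *\<^sub>R lap_apply (laplacian a) (lam t)) $ i) = 0" for t
    by (simp add: sum_lap_apply_laplacian[OF wb] flip: scaleR_sum_right)
  from sum_nth_const_if_derivative_sum_0[OF dz this]
  have z_sum: "(\<Sum>i\<in>UNIV. (z t - (xs - bb)) $ i) = 0" if "t \<ge> 0" for t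
    using z0 kkt(2) that by (simp add: sum_subtractf)
  note err = idea_error_dynamics[OF kkt(1) dx dlam dz, folded ls_def]
  obtain C c where C: "C > 0" "c > 0"
    and bound: "\<And>t. t \<ge> 0 \<Longrightarrow> norm (x t - xs, lam t - ls, z t - (xs - bb)) \<le> C * exp (- c * t)"
  proof (rule deviation.error_dynamics_exponential_decay[OF \<alpha>(1) \<mu>(1) K \<rho> err, where L = l])
    show "deviation (z t - (xs - bb)) = z t - (xs - bb)" if "t \<ge> 0" for t
      using z_sum[OF that] by (rule deviation_eq_self)
    show "deviation (\<beta> *\<^sub>R lap_apply (laplacian a) (lam t - ls)) = \<beta> *\<^sub>R lap_apply (laplacian a) (lam t - ls)"
      for t by (intro deviation_eq_self) (simp add: sum_lap_apply_laplacian[OF wb] flip: scaleR_sum_right)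
    show "\<mu> * (norm (x t - xs))\<^sup>2 \<le> (x t - xs) \<bullet> (\<chi> i. gf i (x t $ i) - gf i (xs $ i))" for t
      by (rule stacked_gradient_strongly_monotone[OF grad convex \<mu>(2)])
    show "norm (\<chi> i. gf i (x t $ i) - gf i (xs $ i)) \<le> l * norm (x t - xs)" for t
      by (rule stacked_gradient_lipschitz[OF lip l])
    show "4 * \<alpha> * (norm (deviation (lam t - ls)))\<^sup>2
        \<le> (lam t - ls) \<bullet> (\<beta> *\<^sub>R lap_apply (laplacian a) (lam t - ls))" for t
      by (rule Y(1))
    show "norm (\<beta> *\<^sub>R lap_apply (laplacian a) (lam t - ls)) \<le> K * norm (deviation (lam t - ls))" for t
      by (rule Y(2))
  qed (assumption | rule that)+
  show ?thesis
  proof (rule that[OF C])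
    fix t :: real assume "t \<ge> 0"
    then show "norm ((x t, lam t, z t) - (xs, \<chi> i. - \<nu>, xs - bb)) \<le> C * exp (- c * t)"
      using bound by (simp add: ls_def)
  qed
qed

theorem theorem4:
  fixes f :: "'n::finite \<Rightarrow> real^'p \<Rightarrow> real"
    and gf :: "'n \<Rightarrow> real^'p \<Rightarrow> real^'p"
    and a :: "'n \<Rightarrow> 'n \<Rightarrow> real"
    and mu_i l_i :: "'n \<Rightarrow> real"
    and b :: "real^'p" and bb :: "real^'p^'n"
    and \<phi> \<alpha> \<beta> :: real
    and x lam z :: "real \<Rightarrow> real^'p^'n"
  assumes grad: "\<And>i u. (f i has_derivative (\<lambda>h. gf i u \<bullet> h)) (at u)"
    and strong: "\<And>i. mu_i i > 0 \<and> strongly_convex_on (mu_i i) UNIV (f i)"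
    and smooth: "\<And>i. l_i i \<ge> 0 \<and> (\<forall>u v. norm (gf i u - gf i v) \<le> l_i i * norm (u - v))"
    and optex: "\<exists>xo. optimalP f b xo"
    and a_nonneg: "\<And>i j. a i j \<ge> 0"
    and sc: "strongly_connected a"
    and wb: "weight_balanced a"
    and phi: "\<phi> > 0"
    and alpha: "\<alpha> \<ge> max (1/2)
        (((\<phi>\<^sup>2 + 3*\<phi> + 3) + (Max (range l_i))\<^sup>2 + 3/2 - Min (range mu_i))
          / ((\<phi> + 1) * Min (range mu_i)))"
    and beta: "\<beta> \<ge> (2 * (\<phi> + 1)\<^sup>2 * \<alpha>\<^sup>2 + 1) / (2 * \<phi> * \<alpha> * eta2 (sym_part (laplacian a)))"
    and bsum: "(\<Sum>i\<in>UNIV. bb $ i) = b"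
    and dx: "\<And>t. t \<ge> 0 \<Longrightarrow> (x has_vector_derivative
        (\<chi> i. - \<alpha> *\<^sub>R (gf i (x t $ i) + lam t $ i) - (x t $ i - bb $ i - z t $ i))) (at t within {0..})"
    and dlam: "\<And>t. t \<ge> 0 \<Longrightarrow> (lam has_vector_derivative
        (x t - bb - z t - \<beta> *\<^sub>R lap_apply (laplacian a) (lam t))) (at t within {0..})"
    and dz: "\<And>t. t \<ge> 0 \<Longrightarrow> (z has_vector_derivative
        ((\<alpha> * \<beta>) *\<^sub>R lap_apply (laplacian a) (lam t))) (at t within {0..})"
    and z0: "(\<Sum>i\<in>UNIV. z 0 $ i) = 0"
  shows "\<exists>xs ls zs. optimalP f b xs \<and> (\<forall>y. optimalP f b y \<longrightarrow> y = xs) \<and>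
           (\<exists>C c. C > 0 \<and> c > 0 \<and>
              (\<forall>t\<ge>0. norm ((x t, lam t, z t) - (xs, ls, zs)) \<le> C * exp (- c * t)))"
proof -
  obtain xs where opt: "optimalP f b xs" using optex by blast
  define \<nu> where "\<nu> = gf undefined (xs $ undefined)"
  define \<mu> where "\<mu> = Min (range mu_i)"
  define l where "l = Max (range l_i)"
  have \<mu>: "0 < \<mu>" "\<And>i. \<mu> \<le> mu_i i" using strong by (simp_all add: \<mu>_def)
  have l: "\<And>i. l_i i \<le> l" "0 \<le> l" using smooth by (simp_all add: l_def Max_ge_iff)
  have \<alpha>: "0 < \<alpha>" "1 < 4 * \<alpha> * \<mu>"
    using four_alpha_mu_gt_1[OF phi \<mu>(1) alpha[folded \<mu>_def l_def]] by simp_all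
  have gain: "4 * \<alpha> \<le> \<beta> * eta2 (sym_part (laplacian a))" if "CARD('n) \<ge> 2"
    using four_alpha_le_beta_eta[OF phi \<alpha>(1) eta2_sym_part_laplacian(1)[OF wb a_nonneg sc that] beta] .
  have kkt: "gf i (xs $ i) = \<nu>" for i
    unfolding \<nu>_def by (rule optimalP_gradients_eq[OF grad opt])
  moreover have "(\<Sum>i\<in>UNIV. xs $ i) = (\<Sum>i\<in>UNIV. bb $ i)"
    using opt bsum by (simp add: optimalP_def feasibleP_def)
  ultimately obtain C c where "C > 0" "c > 0"
    "\<And>t. t \<ge> 0 \<Longrightarrow> norm ((x t, lam t, z t) - (xs, \<chi> i. - \<nu>, xs - bb)) \<le> C * exp (- c * t)"
    using idea_exponential_convergence[OF grad strong[THEN conjunct2] \<mu> smooth[THEN conjunct2, rule_format]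
        l a_nonneg sc wb \<alpha> gain _ _ dx dlam dz z0] by metis
  then show ?thesis using opt optimalP_unique[OF grad strong opt] by blast
qed

end
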